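(* Assume $G$ and $G'$ are nonamenable. For each $n$, let $v''_n:=|D_n(o'')|$, let $\Phi_n\subseteq G''$ be a Bernoulli random subset in which each point of $G''$ is included independently with probability $1/v''_n$, and let $\mathbf C_n:=\{(D_n(x''),x''): x''\in\Phi_n\}$, a point process in $\mathcal C(G'')$. Suppose $(n_k)$ is a strictly increasing sequence such that $\mathbf C_{n_k}$ converges weakly to a point process $\mathbf C$ in $\mathcal C(G'')$. Then almost surely $\mathbf C\ne\emptyset$ and every element of $\mathbf C$ is a perturbed pointed horoball of type II (possibly with infinite delay).
   Context: $G,G'$ are finitely generated groups with neutral elements $o,o'$, word metrics $d,d'$ from Cayley graphs with respect to finite generating sets, ball volumes $v_n,v'_n$, growth rates $a=\lim v_n^{1/n}$, $a'=\lim (v'_n)^{1/n}$ (both $>1$ under nonamenability), and $c:=\log a/\log a'$. $G''=G\times G'$ has origin $o''=(o,o')$ and metric $\rho_c((x,x'),(y,y'))=d(x,y)+d'(x',y')/c$. Fix a non-decreasing $f:\mathbb Z_{\ge0}\to\mathbb Z_{\ge0}$ and a strictly increasing sequence $(r_j)$ in $\mathbb Z_{\ge0}$ with $f(0)=0$, $r'_j:=f(r_j)$, $0<\inf_n v'_{r'_n}/v_{r_n}\le \sup_n v'_{r'_n}/v_{r_n}<\infty$ and $\forall m\,\exists N\,\forall n\ge N:|f(n+m)-f(n)-cm|\le1$. Perturbed diamond: $D_n(x''):=\bigcup_{t=0}^{r_n}\{(y,y'):d(x,y)=r_n-t,\ d'(x',y')\le f(t)\}$ for $x''=(x,x')$.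 Horocompactification $\overline{G''}$ of $(G'',\rho_c)$: with $\rho_{x''}(y'')=\rho_c(x'',y'')-\rho_c(x'',o'')$, the closure of $\{\rho_{x''}\}$ among $1$-Lipschitz functions vanishing at $o''$ under pointwise convergence; similarly $\overline G,\overline{G'}$, and $\partial G=\overline G\setminus G$, $\partial G'$. For $\theta\in\partial G$, $\theta'\in\partial G'$, $(\theta,\theta')\in\partial G''$ is the function $(y,y')\mapsto d_\theta(y)+d_{\theta'}(y')/c$. $\mathcal C(G'')$ is the Polish space of pairs $(B,\theta)$ with $B\subseteq G''$ nonempty and $\theta\in\overline{G''}$, with the product of the Fell topology (pointwise convergence of indicators) and the topology of $\overline{G''}$; point processes in it are random multisets such that each $y''\in G''$ lies in $B$ for only finitely many elements $(B,\theta)$, with weak convergence with respect to vague convergence of counting measures. A perturbed pointed horoball of type II is a pointed set $(B,\theta'')$ which is a limit in $\mathcal C(G'')$ of pointed perturbed diamonds $(D_{m_k}(x''_k),x''_k)$ (parameters $m_k\to\infty$) with centers $x''_k=(x_k,x'_k)$ satisfying $d(x_k,o)\to\infty$ and $d'(x'_k,o')\to\infty$; additionally $(G'',\theta'')$ for any $\theta''\in\partial G\times\partial G'$ counts as one with infinite delay. *)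

theory Defs
  imports "HOL-Analysis.Analysis" "HOL-Probability.Probability"
begin

definition gens :: "'a::group_add set \<Rightarrow> 'a set" where
  "gens S = S \<union> uminus ` S"

definition generates :: "'a::group_add set \<Rightarrow> bool" where
  "generates S \<longleftrightarrow> (\<forall>x. \<exists>ws. set ws \<subseteq> gens S \<and> sum_list ws = x)"

definition word_len :: "'a::group_add set \<Rightarrow> 'a \<Rightarrow> nat" where
  "word_len S x = (LEAST n. \<exists>ws. length ws = n \<and> set ws \<subseteq> gens S \<and> sum_list ws = x)"

text \<open>Left-invariant word metric of the Cayley graph (edges x -- x + s).\<close>
definition wdist :: "'a::group_add set \<Rightarrow> 'a \<Rightarrow> 'a \<Rightarrow> nat" where
  "wdist S x y = word_len S (- x + y)"

definition ball_vol :: "'a::group_add set \<Rightarrow> nat \<Rightarrow> nat" where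
  "ball_vol S n = card {x. wdist S 0 x \<le> n}"

definition growth_rate :: "'a::group_add set \<Rightarrow> real" where
  "growth_rate S = lim (\<lambda>n. root n (real (ball_vol S n)))"

definition nonamenable :: "'a::group_add set \<Rightarrow> bool" where
  "nonamenable S \<longleftrightarrow> (\<exists>\<epsilon>>0. \<forall>F. finite F \<and> F \<noteq> {} \<longrightarrow>
      \<epsilon> * real (card F) \<le> real (card {y. y \<notin> F \<and> (\<exists>x\<in>F. \<exists>s\<in>gens S. y = x + s)}))"

definition cexp :: "'a::group_add set \<Rightarrow> 'b::group_add set \<Rightarrow> real" where
  "cexp S S' = ln (growth_rate S) / ln (growth_rate S')"

definition rho_c :: "'a::group_add set \<Rightarrow> 'b::group_add set \<Rightarrow> 'a \<times> 'b \<Rightarrow> 'a \<times> 'b \<Rightarrow> real" where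
  "rho_c S S' p q = real (wdist S (fst p) (fst q)) + real (wdist S' (snd p) (snd q)) / cexp S S'"

definition horo :: "'a::group_add set \<Rightarrow> 'b::group_add set \<Rightarrow> 'a \<times> 'b \<Rightarrow> ('a \<times> 'b \<Rightarrow> real)" where
  "horo S S' x = (\<lambda>y. rho_c S S' x y - rho_c S S' x (0, 0))"

definition horo_comp :: "'a::group_add set \<Rightarrow> 'b::group_add set \<Rightarrow> ('a \<times> 'b \<Rightarrow> real) set" where
  "horo_comp S S' = (product_topology (\<lambda>_. euclideanreal) UNIV) closure_of (range (horo S S'))"

definition horo1 :: "'a::group_add set \<Rightarrow> 'a \<Rightarrow> ('a \<Rightarrow> real)" where
  "horo1 S x = (\<lambda>y. real (wdist S x y) - real (wdist S x 0))"

definition horo_comp1 :: "'a::group_add set \<Rightarrow> ('a \<Rightarrow> real) set" where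
  "horo_comp1 S = (product_topology (\<lambda>_. euclideanreal) UNIV) closure_of (range (horo1 S))"

definition horo_bdry1 :: "'a::group_add set \<Rightarrow> ('a \<Rightarrow> real) set" where
  "horo_bdry1 S = horo_comp1 S - range (horo1 S)"

text \<open>The part dG x dG' of the boundary of G''.\<close>
definition prod_bdry :: "'a::group_add set \<Rightarrow> 'b::group_add set \<Rightarrow> ('a \<times> 'b \<Rightarrow> real) set" where
  "prod_bdry S S' = {(\<lambda>(y, y'). \<theta> y + \<theta>' y' / cexp S S') | \<theta> \<theta>'. \<theta> \<in> horo_bdry1 S \<and> \<theta>' \<in> horo_bdry1 S'}"

definition diamond :: "'a::group_add set \<Rightarrow> 'b::group_add set \<Rightarrow> (nat \<Rightarrow> nat) \<Rightarrow> (nat \<Rightarrow> nat)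
    \<Rightarrow> nat \<Rightarrow> 'a \<times> 'b \<Rightarrow> ('a \<times> 'b) set" where
  "diamond S S' f r n x = (\<Union>t\<in>{0..r n}.
      {(y, y'). wdist S (fst x) y = r n - t \<and> wdist S' (snd x) y' \<le> f t})"

definition Cspace :: "'a::group_add set \<Rightarrow> 'b::group_add set \<Rightarrow> (('a \<times> 'b) set \<times> ('a \<times> 'b \<Rightarrow> real)) set" where
  "Cspace S S' = {(B, \<theta>). B \<noteq> {} \<and> \<theta> \<in> horo_comp S S'}"

text \<open>Fell topology = pointwise convergence of indicators.\<close>
definition fell_top :: "'c set topology" where
  "fell_top = pullback_topology UNIV (\<lambda>B y. y \<in> B) (product_topology (\<lambda>_. discrete_topology UNIV) UNIV)"

definition Ctop :: "'a::group_add set \<Rightarrow> 'b::group_add set \<Rightarrow> (('a \<times> 'b) set \<times> ('a \<times> 'b \<Rightarrow> real)) topology" where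
  "Ctop S S' = subtopology (prod_topology fell_top (product_topology (\<lambda>_. euclideanreal) UNIV)) (Cspace S S')"

definition horoball_II :: "'a::group_add set \<Rightarrow> 'b::group_add set \<Rightarrow> (nat \<Rightarrow> nat) \<Rightarrow> (nat \<Rightarrow> nat)
    \<Rightarrow> ('a \<times> 'b) set \<times> ('a \<times> 'b \<Rightarrow> real) \<Rightarrow> bool" where
  "horoball_II S S' f r e \<longleftrightarrow>
     (\<exists>m x. filterlim m at_top sequentially
        \<and> filterlim (\<lambda>k. wdist S 0 (fst (x k))) at_top sequentially
        \<and> filterlim (\<lambda>k. wdist S' 0 (snd (x k))) at_top sequentially
        \<and> limitin (Ctop S S') (\<lambda>k. (diamond S S' f r (m k) (x k), horo S S' (x k))) e sequentially)
   \<or> (fst e = UNIV \<and> snd e \<in> prod_bdry S S')"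

text \<open>Locally finite counting measures (multisets) on C(G'').\<close>
definition Nspace :: "'a::group_add set \<Rightarrow> 'b::group_add set
    \<Rightarrow> ((('a \<times> 'b) set \<times> ('a \<times> 'b \<Rightarrow> real)) \<Rightarrow> nat) set" where
  "Nspace S S' = {\<nu>. (\<forall>e. 0 < \<nu> e \<longrightarrow> e \<in> Cspace S S') \<and> (\<forall>y. finite {e. 0 < \<nu> e \<and> y \<in> fst e})}"

text \<open>Test functions for vague convergence: continuous, with bounded support
  (support inside finitely many sets of the form {(B,theta). y \<in> B}).\<close>
definition test_fun :: "'a::group_add set \<Rightarrow> 'b::group_add set
    \<Rightarrow> ((('a \<times> 'b) set \<times> ('a \<times> 'b \<Rightarrow> real)) \<Rightarrow> real) \<Rightarrow> bool" where
  "test_fun S S' g \<longleftrightarrow> continuous_map (Ctop S S') euclideanreal g \<and>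
     (\<exists>F. finite F \<and> (\<forall>e\<in>Cspace S S'. g e \<noteq> 0 \<longrightarrow> (\<exists>y\<in>F. y \<in> fst e)))"

definition cintegral :: "('e \<Rightarrow> nat) \<Rightarrow> ('e \<Rightarrow> real) \<Rightarrow> real" where
  "cintegral \<nu> g = (\<Sum>e\<in>{e. 0 < \<nu> e \<and> g e \<noteq> 0}. real (\<nu> e) * g e)"

definition vague_top :: "'a::group_add set \<Rightarrow> 'b::group_add set
    \<Rightarrow> ((('a \<times> 'b) set \<times> ('a \<times> 'b \<Rightarrow> real)) \<Rightarrow> nat) topology" where
  "vague_top S S' = pullback_topology (Nspace S S')
      (\<lambda>\<nu> g. if test_fun S S' g then cintegral \<nu> g else 0)
      (product_topology (\<lambda>_. euclideanreal) UNIV)"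

definition vague_borel :: "'a::group_add set \<Rightarrow> 'b::group_add set
    \<Rightarrow> ((('a \<times> 'b) set \<times> ('a \<times> 'b \<Rightarrow> real)) \<Rightarrow> nat) measure" where
  "vague_borel S S' = sigma (Nspace S S') {U. openin (vague_top S S') U}"

definition bern_set :: "'a::group_add set \<Rightarrow> 'b::group_add set \<Rightarrow> (nat \<Rightarrow> nat) \<Rightarrow> (nat \<Rightarrow> nat)
    \<Rightarrow> nat \<Rightarrow> ('a \<times> 'b \<Rightarrow> bool) measure" where
  "bern_set S S' f r n = PiM UNIV (\<lambda>_. measure_pmf
      (bernoulli_pmf (1 / real (card (diamond S S' f r n (0, 0))))))"

definition cproc_map :: "'a::group_add set \<Rightarrow> 'b::group_add set \<Rightarrow> (nat \<Rightarrow> nat) \<Rightarrow> (nat \<Rightarrow> nat)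
    \<Rightarrow> nat \<Rightarrow> ('a \<times> 'b \<Rightarrow> bool) \<Rightarrow> ((('a \<times> 'b) set \<times> ('a \<times> 'b \<Rightarrow> real)) \<Rightarrow> nat)" where
  "cproc_map S S' f r n \<Phi> = (\<lambda>e. if \<exists>x. \<Phi> x \<and> e = (diamond S S' f r n x, horo S S' x) then 1 else 0)"

definition law_C :: "'a::group_add set \<Rightarrow> 'b::group_add set \<Rightarrow> (nat \<Rightarrow> nat) \<Rightarrow> (nat \<Rightarrow> nat)
    \<Rightarrow> nat \<Rightarrow> ((('a \<times> 'b) set \<times> ('a \<times> 'b \<Rightarrow> real)) \<Rightarrow> nat) measure" where
  "law_C S S' f r n = distr (bern_set S S' f r n) (vague_borel S S') (cproc_map S S' f r n)"

definition weak_conv_pp :: "'a::group_add set \<Rightarrow> 'b::group_add set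
    \<Rightarrow> (nat \<Rightarrow> ((('a \<times> 'b) set \<times> ('a \<times> 'b \<Rightarrow> real)) \<Rightarrow> nat) measure)
    \<Rightarrow> ((('a \<times> 'b) set \<times> ('a \<times> 'b \<Rightarrow> real)) \<Rightarrow> nat) measure \<Rightarrow> bool" where
  "weak_conv_pp S S' Ps P \<longleftrightarrow> (\<forall>F. continuous_map (vague_top S S') euclideanreal F
      \<and> (\<exists>K. \<forall>\<nu>\<in>Nspace S S'. \<bar>F \<nu>\<bar> \<le> K)
      \<longrightarrow> (\<lambda>k. \<integral>\<nu>. F \<nu> \<partial>(Ps k)) \<longlonglongrightarrow> (\<integral>\<nu>. F \<nu> \<partial>P))"

end

theory Submission
  imports Defs
begin

text \<open>Both claims follow by passing bounds on bounded continuous functionals of \<open>C\<^sub>n\<close> to the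
  weak limit. By nonamenability of \<open>G\<close>, at least \<open>(1 + \<epsilon>)\<^sup>R v''\<^sub>n\<close> centres have a diamond
  meeting the \<open>R\<close>-ball of the axis \<open>G \<times> {o'}\<close>, so \<open>C\<^sub>n\<close> misses that ball with probability at
  most \<open>1 / (1 + (1 + \<epsilon>)\<^sup>R)\<close>; hence the limit is almost surely nonempty. An element of the limit
  is recognised, up to any precision, by a finite pattern: membership of finitely many points
  and rational approximations of the horofunction there. If no diamond with large parameter and
  centre far from both axes realises a pattern, then \<open>C\<^sub>n\<close> can only exhibit it through a diamond
  whose centre is near an axis, and the expected number of those is \<open>O(1/n)\<close>: there are
  \<open>O(|B(r\<^sub>n)|)\<close> such centres for a given point, while \<open>v''\<^sub>n \<ge> c n |B(r\<^sub>n)|\<close>. Countably many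
  patterns suffice, so almost surely every element of the limit is a limit of far-away
  diamonds.\<close>

lemma uminus_in_gens: "s \<in> gens S \<Longrightarrow> - s \<in> gens S"
  by (auto simp: gens_def)

lemma word_len_attained:
  assumes "generates S"
  obtains ws where "length ws = word_len S x" "set ws \<subseteq> gens S" "sum_list ws = x"
proof -
  from assms obtain ws where "set ws \<subseteq> gens S" "sum_list ws = x"
    unfolding generates_def by blast
  then have "\<exists>n ws. length ws = n \<and> set ws \<subseteq> gens S \<and> sum_list ws = x" by blast
  then have "\<exists>ws. length ws = word_len S x \<and> set ws \<subseteq> gens S \<and> sum_list ws = x"
    unfolding word_len_def by (rule LeastI_ex)
  then show ?thesis using that by blast
qed

lemma word_len_le_length:
  assumes "set ws \<subseteq> gens S" "sum_list ws = x"
  shows "word_len S x \<le> length ws"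
  unfolding word_len_def using assms by (intro Least_le) blast

lemma word_len_zero [simp]: "word_len S 0 = 0"
  using word_len_le_length[of "[]" S 0] by simp

lemma word_len_gen_le_1: "s \<in> gens S \<Longrightarrow> word_len S s \<le> 1"
  using word_len_le_length[of "[s]" S s] by simp

lemma sum_list_rev_map_uminus: "sum_list (rev (map uminus ws)) = - sum_list (ws :: 'a::group_add list)"
  by (induction ws) (auto simp: minus_add)

lemma word_len_uminus [simp]:
  assumes "generates S"
  shows "word_len S (- x) = word_len S x"
proof -
  have le: "word_len S (- y) \<le> word_len S y" for y
  proof -
    obtain ws where ws: "length ws = word_len S y" "set ws \<subseteq> gens S" "sum_list ws = y"
      using word_len_attained[OF assms] .
    have "set (rev (map uminus ws)) \<subseteq> gens S" using ws(2) by (auto simp: uminus_in_gens)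
    from word_len_le_length[OF this] ws show ?thesis by (simp add: sum_list_rev_map_uminus)
  qed
  show ?thesis using le[of x] le[of "- x"] by simp
qed

lemma word_len_add_le:
  assumes "generates S"
  shows "word_len S (x + y) \<le> word_len S x + word_len S y"
proof -
  obtain ws where ws: "length ws = word_len S x" "set ws \<subseteq> gens S" "sum_list ws = x"
    using word_len_attained[OF assms] .
  obtain vs where vs: "length vs = word_len S y" "set vs \<subseteq> gens S" "sum_list vs = y"
    using word_len_attained[OF assms] .
  have "word_len S (x + y) \<le> length (ws @ vs)"
    by (rule word_len_le_length) (use ws vs in auto)
  then show ?thesis using ws vs by simp
qed

lemma wdist_self [simp]: "wdist S x x = 0"
  by (simp add: wdist_def)

lemma wdist_zero_left [simp]: "wdist S 0 x = word_len S x"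
  by (simp add: wdist_def)

lemma wdist_commute:
  assumes "generates S" shows "wdist S x y = wdist S y x"
proof -
  have "- (- x + y) = - y + x" by (simp add: minus_add)
  then show ?thesis unfolding wdist_def using word_len_uminus[OF assms, of "- x + y"] by simp
qed

definition word_ball :: "'a::group_add set \<Rightarrow> nat \<Rightarrow> 'a set" where
  "word_ball S n = {x. word_len S x \<le> n}"

lemma ball_vol_eq_card: "ball_vol S n = card (word_ball S n)"
  by (simp add: ball_vol_def word_ball_def)

lemma zero_in_word_ball [simp]: "0 \<in> word_ball S n"
  by (simp add: word_ball_def)

lemma finite_word_ball:
  assumes "finite S" "generates S"
  shows "finite (word_ball S n)"
proof -
  have "word_ball S n \<subseteq> sum_list ` {ws. set ws \<subseteq> gens S \<and> length ws \<le> n}"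
  proof
    fix x assume "x \<in> word_ball S n"
    moreover obtain ws where "length ws = word_len S x" "set ws \<subseteq> gens S" "sum_list ws = x"
      using word_len_attained[OF assms(2)] .
    ultimately show "x \<in> sum_list ` {ws. set ws \<subseteq> gens S \<and> length ws \<le> n}"
      by (force simp: word_ball_def)
  qed
  moreover have "finite {ws. set ws \<subseteq> gens S \<and> length ws \<le> n}"
    using finite_lists_length_le[of "gens S"] assms(1) by (simp add: gens_def)
  ultimately show ?thesis by (meson finite_imageI finite_subset)
qed

lemma finite_word_sphere:
  assumes "finite S" "generates S"
  shows "finite {x. word_len S x = n}"
  using finite_word_ball[OF assms, of n] by (rule rev_finite_subset) (auto simp: word_ball_def)

lemma ball_vol_pos:
  assumes "finite S" "generates S"
  shows "0 < ball_vol S n"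
  using finite_word_ball[OF assms, of n] zero_in_word_ball[of S n]
  unfolding ball_vol_eq_card card_gt_0_iff by blast

lemma countable_UNIV_if_generates:
  fixes S :: "'a::group_add set"
  assumes "finite S" "generates S"
  shows "countable (UNIV :: 'a set)"
proof -
  have "(UNIV :: 'a set) = (\<Union>n. word_ball S n)" by (auto simp: word_ball_def)
  moreover have "countable (\<Union>n. word_ball S n)"
    using finite_word_ball[OF assms] by (intro countable_UN) (auto intro: countable_finite)
  ultimately show ?thesis by simp
qed

lemma wdist_ball_subset: "{x. wdist S x c \<le> n} \<subseteq> (\<lambda>u. c + - u) ` word_ball S n"
proof
  fix x assume "x \<in> {x. wdist S x c \<le> n}"
  then have "- x + c \<in> word_ball S n" by (simp add: wdist_def word_ball_def)
  moreover have "x = c + - (- x + c)" by (simp add: minus_add add.assoc)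
  ultimately show "x \<in> (\<lambda>u. c + - u) ` word_ball S n" by blast
qed

lemma finite_wdist_ball:
  assumes "finite S" "generates S"
  shows "finite {x. wdist S x c \<le> n}"
  using finite_subset[OF wdist_ball_subset finite_imageI[OF finite_word_ball[OF assms]]] .

lemma card_wdist_ball_le:
  assumes "finite S" "generates S"
  shows "card {x. wdist S x c \<le> n} \<le> ball_vol S n"
  unfolding ball_vol_eq_card
  by (rule order.trans[OF card_mono[OF _ wdist_ball_subset] card_image_le])
     (use finite_word_ball[OF assms] in auto)

lemma ball_vol_add_le:
  assumes "finite S" "generates S"
  shows "ball_vol S (a + b) \<le> ball_vol S a * ball_vol S b"
proof -
  have "word_ball S (a + b) \<subseteq> (\<lambda>(u, v). u + v) ` (word_ball S a \<times> word_ball S b)"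
  proof
    fix x assume "x \<in> word_ball S (a + b)"
    then have len: "word_len S x \<le> a + b" by (simp add: word_ball_def)
    obtain ws where ws: "length ws = word_len S x" "set ws \<subseteq> gens S" "sum_list ws = x"
      using word_len_attained[OF assms(2)] .
    have "word_len S (sum_list (take a ws)) \<le> length (take a ws)"
      by (rule word_len_le_length) (use ws in \<open>auto dest: in_set_takeD\<close>)
    then have "sum_list (take a ws) \<in> word_ball S a" by (simp add: word_ball_def)
    moreover have "word_len S (sum_list (drop a ws)) \<le> length (drop a ws)"
      by (rule word_len_le_length) (use ws in \<open>auto dest: in_set_dropD\<close>)
    then have "sum_list (drop a ws) \<in> word_ball S b" using len ws(1) by (simp add: word_ball_def)
    moreover have "x = sum_list (take a ws) + sum_list (drop a ws)"
      using ws(3) by (metis append_take_drop_id sum_list_append)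
    ultimately show "x \<in> (\<lambda>(u, v). u + v) ` (word_ball S a \<times> word_ball S b)" by force
  qed
  then have "card (word_ball S (a + b)) \<le> card ((\<lambda>(u, v). u + v) ` (word_ball S a \<times> word_ball S b))"
    using finite_word_ball[OF assms] by (intro card_mono) auto
  also have "\<dots> \<le> card (word_ball S a \<times> word_ball S b)" by (rule card_image_le) (use finite_word_ball[OF assms] in auto)
  finally show ?thesis by (simp add: ball_vol_eq_card card_cartesian_product)
qed

definition outer_boundary :: "'a::group_add set \<Rightarrow> 'a set \<Rightarrow> 'a set" where
  "outer_boundary S F = {y. y \<notin> F \<and> (\<exists>x\<in>F. \<exists>s\<in>gens S. y = x + s)}"

lemma nonamenableE:
  assumes "nonamenable S"
  obtains \<epsilon> where "0 < \<epsilon>"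
    "\<And>F. finite F \<Longrightarrow> F \<noteq> {} \<Longrightarrow> \<epsilon> * real (card F) \<le> real (card (outer_boundary S F))"
  using assms unfolding nonamenable_def outer_boundary_def by blast

lemma word_sphere_card_ge:
  assumes "finite S" "generates S" "nonamenable S"
  obtains c where "0 < c" "\<And>n. c * real (ball_vol S n) \<le> real (card {x. word_len S x = n})"
proof -
  obtain \<epsilon> where \<epsilon>: "0 < \<epsilon>" and iso: "\<And>F. finite F \<Longrightarrow> F \<noteq> {} \<Longrightarrow>
      \<epsilon> * real (card F) \<le> real (card (outer_boundary S F))"
    using nonamenableE[OF assms(3)] by blast
  have "\<epsilon> / (1 + \<epsilon>) * real (ball_vol S n) \<le> real (card {x. word_len S x = n})" for n
  proof (cases n)
    case 0
    have "{x. word_len S x = 0} = word_ball S 0" by (auto simp: word_ball_def)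
    moreover have "\<epsilon> / (1 + \<epsilon>) \<le> 1" using \<epsilon> by simp
    ultimately show ?thesis using 0 mult_right_mono[of "\<epsilon> / (1 + \<epsilon>)" 1 "real (ball_vol S n)"]
      by (simp add: ball_vol_eq_card)
  next
    case (Suc m)
    let ?F = "word_ball S m" and ?Sp = "{x. word_len S x = n}"
    have "outer_boundary S ?F \<subseteq> ?Sp"
    proof (safe, unfold outer_boundary_def, safe)
      fix x s assume "x + s \<notin> ?F" "x \<in> ?F" "s \<in> gens S"
      then show "word_len S (x + s) = n"
        using word_len_add_le[OF assms(2), of x s] word_len_gen_le_1[of s S] Suc
        by (auto simp: word_ball_def)
    qed
    then have "card (outer_boundary S ?F) \<le> card ?Sp"
      by (rule card_mono[OF finite_word_sphere[OF assms(1,2)]])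
    moreover have "?F \<noteq> {}" using zero_in_word_ball by blast
    ultimately have "\<epsilon> * real (card ?F) \<le> real (card ?Sp)"
      using iso[OF finite_word_ball[OF assms(1,2)]] by (meson of_nat_le_iff order_trans)
    moreover have "word_ball S n = ?F \<union> ?Sp" "?F \<inter> ?Sp = {}" using Suc by (auto simp: word_ball_def)
    then have "real (ball_vol S n) = real (card ?F) + real (card ?Sp)"
      using finite_word_ball[OF assms(1,2)] finite_word_sphere[OF assms(1,2)]
      by (simp add: ball_vol_eq_card card_Un_disjoint)
    ultimately have "\<epsilon> * real (ball_vol S n) \<le> (1 + \<epsilon>) * real (card ?Sp)"
      by (simp add: algebra_simps)
    then show ?thesis using \<epsilon> by (simp add: field_simps)
  qed
  moreover have "0 < \<epsilon> / (1 + \<epsilon>)" using \<epsilon> by simp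
  ultimately show ?thesis using that by blast
qed

definition thicken_fst :: "'a::group_add set \<Rightarrow> ('a \<times> 'b) set \<Rightarrow> ('a \<times> 'b) set" where
  "thicken_fst S Z = Z \<union> {(a + s, b) | a b s. (a, b) \<in> Z \<and> s \<in> gens S}"

lemma card_eq_sum_card_fibres:
  assumes "finite Z"
  shows "card Z = (\<Sum>b\<in>snd ` Z. card {a. (a, b) \<in> Z})"
proof -
  have Z: "Z = (\<Union>b\<in>snd ` Z. (\<lambda>a. (a, b)) ` {a. (a, b) \<in> Z})" by force
  have fin: "finite {a. (a, b) \<in> Z}" for b
    using finite_imageI[OF assms, of fst] by (rule rev_finite_subset) force
  have "card Z = (\<Sum>b\<in>snd ` Z. card ((\<lambda>a. (a, b)) ` {a. (a, b) \<in> Z}))"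
    by (subst Z, rule card_UN_disjoint) (use assms fin in auto)
  also have "\<dots> = (\<Sum>b\<in>snd ` Z. card {a. (a, b) \<in> Z})"
    by (intro sum.cong refl card_image) (auto simp: inj_on_def)
  finally show ?thesis .
qed

lemma finite_thicken_fst:
  assumes "finite S" "finite Z"
  shows "finite (thicken_fst S Z)"
proof -
  have "thicken_fst S Z \<subseteq> Z \<union> (\<lambda>(p, s). (fst p + s, snd p)) ` (Z \<times> gens S)"
    unfolding thicken_fst_def by (auto, force)
  moreover have "finite (gens S)" using assms(1) by (simp add: gens_def)
  ultimately show ?thesis using assms(2) by (meson finite_SigmaI finite_UnI finite_imageI finite_subset)
qed

lemma card_thicken_fst_ge:
  assumes "finite S" "finite Z"
    and iso: "\<And>F. finite F \<Longrightarrow> F \<noteq> {} \<Longrightarrow> \<epsilon> * real (card F) \<le> real (card (outer_boundary S F))"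
  shows "(1 + \<epsilon>) * real (card Z) \<le> real (card (thicken_fst S Z))"
proof -
  define fibre where "fibre b = {a. (a, b) \<in> Z}" for b
  have fin: "finite (fibre b)" for b unfolding fibre_def
    using finite_imageI[OF assms(2), of fst] by (rule rev_finite_subset) force
  have fin_bd: "finite (outer_boundary S (fibre b))" for b
  proof -
    have "outer_boundary S (fibre b) \<subseteq> (\<lambda>(x, s). x + s) ` (fibre b \<times> gens S)"
      by (auto simp: outer_boundary_def)
    moreover have "finite (gens S)" using assms(1) by (simp add: gens_def)
    ultimately show ?thesis using fin by (meson finite_SigmaI finite_imageI finite_subset)
  qed
  have snd_eq: "snd ` thicken_fst S Z = snd ` Z" by (force simp: thicken_fst_def)
  have fibre_eq: "{a. (a, b) \<in> thicken_fst S Z} = fibre b \<union> outer_boundary S (fibre b)" for b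
    by (auto simp: thicken_fst_def fibre_def outer_boundary_def)
  have "(1 + \<epsilon>) * real (card Z) = (\<Sum>b\<in>snd ` Z. (1 + \<epsilon>) * real (card (fibre b)))"
    by (simp add: card_eq_sum_card_fibres[OF assms(2)] fibre_def sum_distrib_left)
  also have "\<dots> \<le> (\<Sum>b\<in>snd ` Z. real (card (fibre b \<union> outer_boundary S (fibre b))))"
  proof (rule sum_mono)
    fix b assume "b \<in> snd ` Z"
    then have "fibre b \<noteq> {}" by (force simp: fibre_def)
    moreover have "card (fibre b \<union> outer_boundary S (fibre b)) = card (fibre b) + card (outer_boundary S (fibre b))"
      by (rule card_Un_disjoint) (use fin fin_bd in \<open>auto simp: outer_boundary_def\<close>)
    ultimately show "(1 + \<epsilon>) * real (card (fibre b)) \<le> real (card (fibre b \<union> outer_boundary S (fibre b)))"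
      using iso[OF fin] by (simp add: algebra_simps)
  qed
  also have "\<dots> = real (card (thicken_fst S Z))"
    by (simp add: card_eq_sum_card_fibres[OF finite_thicken_fst[OF assms(1,2)]] snd_eq fibre_eq)
  finally show ?thesis .
qed

lemma finite_thicken_fst_iter:
  assumes "finite S" "finite Z"
  shows "finite ((thicken_fst S ^^ R) Z)"
  by (induction R) (simp_all add: assms finite_thicken_fst)

lemma card_thicken_fst_iter_ge:
  assumes "finite S" "0 < \<epsilon>" "finite Z"
    and iso: "\<And>F. finite F \<Longrightarrow> F \<noteq> {} \<Longrightarrow> \<epsilon> * real (card F) \<le> real (card (outer_boundary S F))"
  shows "(1 + \<epsilon>) ^ R * real (card Z) \<le> real (card ((thicken_fst S ^^ R) Z))"
proof (induction R)
  case (Suc R)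
  have "(1 + \<epsilon>) ^ Suc R * real (card Z) \<le> (1 + \<epsilon>) * real (card ((thicken_fst S ^^ R) Z))"
    using Suc assms(2) by (simp add: mult.assoc mult_left_mono)
  also have "\<dots> \<le> real (card ((thicken_fst S ^^ Suc R) Z))"
    using card_thicken_fst_ge[OF assms(1) finite_thicken_fst_iter[OF assms(1,3)] iso] by simp
  finally show ?case .
qed simp

lemma mem_thicken_fst_iterE:
  assumes "generates S" "z \<in> (thicken_fst S ^^ R) Z"
  obtains a u where "a \<in> Z" "word_len S u \<le> R" "z = (fst a + u, snd a)"
  using assms(2)
proof (induction R arbitrary: z thesis)
  case 0
  then show ?case using 0(1)[of z 0] by simp
next
  case (Suc R)
  from Suc.prems(2) consider "z \<in> (thicken_fst S ^^ R) Z"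
    | a b s where "(a, b) \<in> (thicken_fst S ^^ R) Z" "s \<in> gens S" "z = (a + s, b)"
    unfolding thicken_fst_def by auto
  then show ?case
  proof cases
    case 1
    obtain c u where "c \<in> Z" "word_len S u \<le> R" "z = (fst c + u, snd c)"
      using Suc.IH[OF _ 1] by blast
    then show ?thesis using Suc.prems(1) le_SucI by blast
  next
    case 2
    obtain c u where cu: "c \<in> Z" "word_len S u \<le> R" "(a, b) = (fst c + u, snd c)"
      using Suc.IH[OF _ 2(1)] by blast
    have "word_len S (u + s) \<le> Suc R"
      using word_len_add_le[OF assms(1), of u s] word_len_gen_le_1[OF 2(2)] cu(2) by linarith
    moreover have "z = (fst c + (u + s), snd c)" using 2(3) cu(3) by (simp add: add.assoc)
    ultimately show ?thesis using Suc.prems(1) cu(1) by blast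
  qed
qed

lemma mem_diamond:
  "y \<in> diamond S S' f r n x \<longleftrightarrow>
    (\<exists>t\<le>r n. wdist S (fst x) (fst y) = r n - t \<and> wdist S' (snd x) (snd y) \<le> f t)"
  by (cases y) (auto simp: diamond_def)

lemma center_in_diamond: "x \<in> diamond S S' f r n x"
  unfolding mem_diamond by (intro exI[of _ "r n"]) auto

lemma diamond_wdist_le:
  assumes "mono f" "y \<in> diamond S S' f r n x"
  shows "wdist S (fst x) (fst y) \<le> r n" "wdist S' (snd x) (snd y) \<le> f (r n)"
  using assms by (auto simp: mem_diamond mono_def intro: order.trans)

lemma sphere_times_ball_subset_diamond:
  assumes "t \<le> r n"
  shows "{u. word_len S u = r n - t} \<times> word_ball S' (f t) \<subseteq> diamond S S' f r n (0, 0)"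
  unfolding mem_diamond subset_iff using assms by (auto simp: word_ball_def)

definition hit_centers :: "'a::group_add set \<Rightarrow> 'b::group_add set \<Rightarrow> (nat \<Rightarrow> nat) \<Rightarrow> (nat \<Rightarrow> nat)
    \<Rightarrow> nat \<Rightarrow> nat \<Rightarrow> ('a \<times> 'b) set" where
  "hit_centers S S' f r n R = {x. \<exists>w\<in>word_ball S R. (w, 0) \<in> diamond S S' f r n x}"

locale diamond_family =
  fixes S :: "'a::group_add set" and S' :: "'b::group_add set" and f r :: "nat \<Rightarrow> nat"
  assumes finite_S: "finite S" and generates_S: "generates S"
    and finite_S': "finite S'" and generates_S': "generates S'" and mono_f: "mono f"
begin

abbreviation D :: "nat \<Rightarrow> 'a \<times> 'b \<Rightarrow> ('a \<times> 'b) set" where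
  "D \<equiv> diamond S S' f r"

lemma centers_covering_subset:
  "{x. y \<in> D n x} \<subseteq> {u. wdist S u (fst y) \<le> r n} \<times> {u. wdist S' u (snd y) \<le> f (r n)}"
proof
  fix x assume "x \<in> {x. y \<in> D n x}"
  then have "y \<in> D n x" by simp
  from diamond_wdist_le[OF mono_f this]
  show "x \<in> {u. wdist S u (fst y) \<le> r n} \<times> {u. wdist S' u (snd y) \<le> f (r n)}"
    by (simp add: mem_Times_iff)
qed

lemma finite_centers_covering: "finite {x. y \<in> D n x}"
  using centers_covering_subset finite_wdist_ball[OF finite_S generates_S]
    finite_wdist_ball[OF finite_S' generates_S'] by (meson finite_SigmaI finite_subset)

lemma finite_diamond: "finite (D n x)"
proof -
  have "D n x \<subseteq> {u. wdist S u (fst x) \<le> r n} \<times> {u. wdist S' u (snd x) \<le> f (r n)}"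
  proof
    fix y assume "y \<in> D n x"
    from diamond_wdist_le[OF mono_f this]
    show "y \<in> {u. wdist S u (fst x) \<le> r n} \<times> {u. wdist S' u (snd x) \<le> f (r n)}"
      using wdist_commute[OF generates_S, of "fst y"] wdist_commute[OF generates_S', of "snd y"]
      by (simp add: mem_Times_iff)
  qed
  then show ?thesis
    using finite_wdist_ball[OF finite_S generates_S] finite_wdist_ball[OF finite_S' generates_S']
    by (meson finite_SigmaI finite_subset)
qed

lemma card_diamond_pos: "0 < card (D n x)"
  using finite_diamond center_in_diamond card_gt_0_iff by blast

lemma card_sphere_times_ball_ge:
  assumes "t \<le> s" "0 \<le> c" "0 \<le> A"
    and sphere: "\<And>a. c * real (ball_vol S a) \<le> real (card {x. word_len S x = a})"
    and ratio: "A * real (ball_vol S t) \<le> real (ball_vol S' u)"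
  shows "c * A * real (ball_vol S s) \<le> real (card ({x. word_len S x = s - t} \<times> word_ball S' u))"
proof -
  have "real (ball_vol S s) \<le> real (ball_vol S (s - t)) * real (ball_vol S t)"
    using ball_vol_add_le[OF finite_S generates_S, of "s - t" t] assms(1) by (simp flip: of_nat_mult)
  then have "c * A * real (ball_vol S s) \<le> (c * real (ball_vol S (s - t))) * (A * real (ball_vol S t))"
    using assms(2,3) by (simp add: mult_left_mono mult_ac)
  also have "\<dots> \<le> real (card {x. word_len S x = s - t}) * real (ball_vol S' u)"
    using assms(2,3) by (intro mult_mono sphere ratio) auto
  finally show ?thesis by (simp add: card_cartesian_product ball_vol_eq_card)
qed

text \<open>The diamond contains the disjoint layers (sphere of radius \<open>r n - r j\<close>) \<open>\<times>\<close>
  (ball of radius \<open>f (r j)\<close>), \<open>j < n\<close>, each of size comparable to \<open>ball_vol S (r n)\<close>.\<close>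

lemma card_diamond_ge_linear:
  assumes "nonamenable S" "strict_mono r" "0 < A"
    and ratio: "\<And>n. A \<le> real (ball_vol S' (f (r n))) / real (ball_vol S (r n))"
  obtains c where "0 < c" "\<And>n. c * real n * real (ball_vol S (r n)) \<le> real (card (D n (0, 0)))"
proof -
  obtain c where c: "0 < c" "\<And>a. c * real (ball_vol S a) \<le> real (card {x. word_len S x = a})"
    using word_sphere_card_ge[OF finite_S generates_S assms(1)] by blast
  have "c * A * real n * real (ball_vol S (r n)) \<le> real (card (D n (0, 0)))" for n
  proof -
    define layer where "layer j = {u. word_len S u = r n - r j} \<times> word_ball S' (f (r j))" for j
    have fin: "finite (layer j)" for j
      unfolding layer_def using finite_word_sphere[OF finite_S generates_S]
        finite_word_ball[OF finite_S' generates_S'] by blast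
    have r_le: "j < n \<Longrightarrow> r j \<le> r n" for j using assms(2) by (simp add: strict_mono_less_eq)
    have disj: "layer i \<inter> layer j = {}" if "i < n" "j < n" "i \<noteq> j" for i j
    proof -
      have "r i \<noteq> r j" using assms(2) that by (auto simp: strict_mono_eq)
      then have "r n - r i \<noteq> r n - r j" using r_le[of i] r_le[of j] that by linarith
      then show ?thesis by (auto simp: layer_def)
    qed
    have "A * real (ball_vol S (r j)) \<le> real (ball_vol S' (f (r j)))" for j
      using ratio[of j] ball_vol_pos[OF finite_S generates_S, of "r j"] by (simp add: field_simps)
    then have "c * A * real (ball_vol S (r n)) \<le> real (card (layer j))" if "j < n" for j
      unfolding layer_def using c assms(3) r_le[OF that] by (intro card_sphere_times_ball_ge) auto
    then have "c * A * real n * real (ball_vol S (r n)) \<le> (\<Sum>j<n. real (card (layer j)))"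
      using sum_mono[of "{..<n}" "\<lambda>_. c * A * real (ball_vol S (r n))"] by (simp add: mult_ac)
    also have "\<dots> = real (card (\<Union>j<n. layer j))"
      by (subst card_UN_disjoint) (use fin disj in auto)
    also have "\<dots> \<le> real (card (D n (0, 0)))"
    proof (intro of_nat_mono card_mono finite_diamond UN_least)
      fix j assume "j \<in> {..<n}"
      then show "layer j \<subseteq> D n (0, 0)"
        unfolding layer_def by (intro sphere_times_ball_subset_diamond r_le) simp
    qed
    finally show ?thesis .
  qed
  then show ?thesis using that[of "c * A"] c(1) assms(3) by (simp add: mult.assoc)
qed

lemma card_near_centers_le:
  "card {x. y \<in> D n x \<and> (word_len S (fst x) < R \<or> word_len S' (snd x) < R)}
     \<le> ball_vol S R * ball_vol S' (f (r n)) + ball_vol S (r n) * ball_vol S' R"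
proof -
  let ?B1 = "word_ball S R \<times> {u. wdist S' u (snd y) \<le> f (r n)}"
  let ?B2 = "{u. wdist S u (fst y) \<le> r n} \<times> word_ball S' R"
  have "{x. y \<in> D n x \<and> (word_len S (fst x) < R \<or> word_len S' (snd x) < R)} \<subseteq> ?B1 \<union> ?B2"
    using centers_covering_subset[of y n] by (auto simp: word_ball_def)
  moreover have "finite ?B1" "finite ?B2"
    using finite_word_ball[OF finite_S generates_S] finite_wdist_ball[OF finite_S' generates_S']
      finite_word_ball[OF finite_S' generates_S'] finite_wdist_ball[OF finite_S generates_S] by auto
  moreover have "card ?B1 \<le> ball_vol S R * ball_vol S' (f (r n))"
    by (simp add: card_cartesian_product ball_vol_eq_card
        card_wdist_ball_le[OF finite_S' generates_S', unfolded ball_vol_eq_card])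
  moreover have "card ?B2 \<le> ball_vol S (r n) * ball_vol S' R"
    by (simp add: card_cartesian_product ball_vol_eq_card
        card_wdist_ball_le[OF finite_S generates_S, unfolded ball_vol_eq_card])
  ultimately show ?thesis
    by (meson add_mono card_Un_le card_mono finite_UnI order_trans)
qed

lemma finite_hit_centers: "finite (hit_centers S S' f r n R)"
proof -
  have "hit_centers S S' f r n R = (\<Union>w\<in>word_ball S R. {x. (w, 0) \<in> D n x})"
    by (auto simp: hit_centers_def)
  then show ?thesis
    using finite_word_ball[OF finite_S generates_S] finite_centers_covering by simp
qed

text \<open>The centres reflected from the \<open>R\<close>-fold thickening of \<open>D n (0, 0)\<close> are hit centres.\<close>

lemma card_hit_centers_ge:
  assumes "nonamenable S"
  obtains \<epsilon> where "0 < \<epsilon>"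
    "\<And>n R. (1 + \<epsilon>) ^ R * real (card (D n (0, 0))) \<le> real (card (hit_centers S S' f r n R))"
proof -
  obtain \<epsilon> where \<epsilon>: "0 < \<epsilon>" and iso: "\<And>F. finite F \<Longrightarrow> F \<noteq> {} \<Longrightarrow>
      \<epsilon> * real (card F) \<le> real (card (outer_boundary S F))"
    using nonamenableE[OF assms] by blast
  have "(1 + \<epsilon>) ^ R * real (card (D n (0, 0))) \<le> real (card (hit_centers S S' f r n R))" for n R
  proof -
    let ?Y = "(thicken_fst S ^^ R) (D n (0, 0))"
    have Y: "(1 + \<epsilon>) ^ R * real (card (D n (0, 0))) \<le> real (card ?Y)"
      by (rule card_thicken_fst_iter_ge[OF finite_S \<epsilon> finite_diamond iso])
    have "uminus ` ?Y \<subseteq> hit_centers S S' f r n R"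
    proof
      fix x assume "x \<in> uminus ` ?Y"
      then obtain z where z: "z \<in> ?Y" "x = - z" by blast
      obtain a u where au: "a \<in> D n (0, 0)" "word_len S u \<le> R" "z = (fst a + u, snd a)"
        using mem_thicken_fst_iterE[OF generates_S z(1)] .
      have "- (- (fst a + u)) + - u = fst a" by (simp add: add.assoc)
      then have "(- u, 0) \<in> D n x"
        using au(1) unfolding z(2) au(3) by (simp add: mem_diamond wdist_def)
      moreover have "- u \<in> word_ball S R" using au(2) generates_S by (simp add: word_ball_def)
      ultimately show "x \<in> hit_centers S S' f r n R" by (auto simp: hit_centers_def)
    qed
    then have "card (uminus ` ?Y) \<le> card (hit_centers S S' f r n R)"
      by (rule card_mono[OF finite_hit_centers])
    moreover have "card (uminus ` ?Y) = card ?Y" by (rule card_image) (auto simp: inj_on_def)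
    ultimately show ?thesis using Y by linarith
  qed
  then show ?thesis using that \<epsilon> by blast
qed

end

lemma prob_space_bern_set: "prob_space (bern_set S S' f r n)"
  unfolding bern_set_def by (intro prob_space_PiM prob_space_measure_pmf)

lemma space_bern_set [simp]: "space (bern_set S S' f r n) = UNIV"
  by (simp add: bern_set_def space_PiM)

context diamond_family
begin

lemma bern_set_avoid:
  assumes "finite X"
  shows "{\<Phi>. \<forall>x\<in>X. \<not> \<Phi> x} \<in> sets (bern_set S S' f r n)"
    and "measure (bern_set S S' f r n) {\<Phi>. \<forall>x\<in>X. \<not> \<Phi> x} = (1 - 1 / real (card (D n (0, 0)))) ^ card X"
proof -
  define p where "p = 1 / real (card (D n (0, 0)))"
  have p: "0 \<le> p" "p \<le> 1" using card_diamond_pos[of n "(0, 0)"] by (auto simp: p_def)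
  let ?M = "\<lambda>_::'a \<times> 'b. measure_pmf (bernoulli_pmf p)"
  have eq: "{\<Phi>. \<forall>x\<in>X. \<not> \<Phi> x} = prod_emb UNIV ?M X (Pi\<^sub>E X (\<lambda>_. {False}))"
    unfolding prod_emb_def by (auto simp: fun_eq_iff restrict_def split: if_splits; metis)
  show "{\<Phi>. \<forall>x\<in>X. \<not> \<Phi> x} \<in> sets (bern_set S S' f r n)"
    unfolding eq bern_set_def p_def[symmetric] by (rule sets_PiM_I) (use assms in auto)
  have "emeasure (bern_set S S' f r n) {\<Phi>. \<forall>x\<in>X. \<not> \<Phi> x} = (\<Prod>i\<in>X. emeasure (?M i) {False})"
    unfolding eq bern_set_def p_def[symmetric]
    by (rule emeasure_PiM_emb) (use assms in \<open>auto intro: prob_space_measure_pmf\<close>)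
  also have "\<dots> = ennreal ((1 - p) ^ card X)"
    using p by (simp add: emeasure_pmf_single ennreal_power)
  finally show "measure (bern_set S S' f r n) {\<Phi>. \<forall>x\<in>X. \<not> \<Phi> x} = (1 - p) ^ card X"
    using p by (simp add: measure_def)
qed

lemma bern_set_hit:
  assumes "finite X"
  shows "{\<Phi>. \<exists>x\<in>X. \<Phi> x} \<in> sets (bern_set S S' f r n)"
    and "measure (bern_set S S' f r n) {\<Phi>. \<exists>x\<in>X. \<Phi> x} \<le> real (card X) / real (card (D n (0, 0)))"
proof -
  interpret prob_space "bern_set S S' f r n" by (rule prob_space_bern_set)
  define p where "p = 1 / real (card (D n (0, 0)))"
  have p: "0 \<le> p" "p \<le> 1" using card_diamond_pos[of n "(0, 0)"] by (auto simp: p_def)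
  have eq: "{\<Phi>. \<exists>x\<in>X. \<Phi> x} = space (bern_set S S' f r n) - {\<Phi>. \<forall>x\<in>X. \<not> \<Phi> x}" by auto
  show "{\<Phi>. \<exists>x\<in>X. \<Phi> x} \<in> sets (bern_set S S' f r n)"
    unfolding eq by (rule sets.compl_sets[OF bern_set_avoid(1)[OF assms]])
  have "measure (bern_set S S' f r n) {\<Phi>. \<exists>x\<in>X. \<Phi> x} = 1 - (1 - p) ^ card X"
    unfolding eq using prob_compl[OF bern_set_avoid(1)[OF assms]] bern_set_avoid(2)[OF assms]
    by (simp add: p_def)
  also have "\<dots> \<le> real (card X) * p"
    using Bernoulli_inequality[of "- p" "card X"] p by simp
  finally show "measure (bern_set S S' f r n) {\<Phi>. \<exists>x\<in>X. \<Phi> x} \<le> real (card X) / real (card (D n (0, 0)))"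
    by (simp add: p_def)
qed

end

lemma topspace_vague_top [simp]: "topspace (vague_top S S') = Nspace S S'"
  by (simp add: vague_top_def topspace_pullback_topology)

lemma space_vague_borel [simp]: "space (vague_borel S S') = Nspace S S'"
  by (simp add: vague_borel_def space_measure_of_conv)

lemma openin_vague_top_in_sets:
  assumes "openin (vague_top S S') U"
  shows "U \<in> sets (vague_borel S S')"
proof -
  have "{U. openin (vague_top S S') U} \<subseteq> Pow (Nspace S S')"
    using openin_subset[of "vague_top S S'"] by auto
  then have "sets (vague_borel S S') = sigma_sets (Nspace S S') {U. openin (vague_top S S') U}"
    unfolding vague_borel_def by (rule sets_measure_of)
  then show ?thesis using assms by auto
qed

lemma borel_measurable_if_continuous_vague:
  assumes "continuous_map (vague_top S S') euclideanreal F"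
  shows "F \<in> borel_measurable (vague_borel S S')"
proof (rule borel_measurableI)
  fix U :: "real set" assume "open U"
  then have "openin euclideanreal U" by (simp only: open_openin)
  then have "openin (vague_top S S') {x \<in> topspace (vague_top S S'). F x \<in> U}"
    using assms unfolding continuous_map_def by blast
  moreover have "F -` U \<inter> space (vague_borel S S') = {x \<in> topspace (vague_top S S'). F x \<in> U}"
    by auto
  ultimately show "F -` U \<inter> space (vague_borel S S') \<in> sets (vague_borel S S')"
    by (simp add: openin_vague_top_in_sets)
qed

lemma sets_law_C [simp]: "sets (law_C S S' f r n) = sets (vague_borel S S')"
  by (simp add: law_C_def)

lemma space_law_C [simp]: "space (law_C S S' f r n) = Nspace S S'"
  by (simp add: law_C_def)

lemma cproc_map_pos_iff:
  "0 < cproc_map S S' f r n \<Phi> e \<longleftrightarrow> (\<exists>x. \<Phi> x \<and> e = (diamond S S' f r n x, horo S S' x))"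
  by (simp add: cproc_map_def)

text \<open>No measurability of \<open>cproc_map\<close> is needed: \<open>distr\<close> assigns measure \<open>0\<close> to sets with
  non-measurable preimage.\<close>

lemma emeasure_law_C_le:
  "emeasure (law_C S S' f r n) A \<le> emeasure (bern_set S S' f r n) (cproc_map S S' f r n -` A)"
proof -
  have "emeasure (law_C S S' f r n) A \<in> {emeasure (bern_set S S' f r n)
      (cproc_map S S' f r n -` A \<inter> space (bern_set S S' f r n)), 0}"
    unfolding law_C_def distr_def emeasure_measure_of_conv by (simp only: if_split insert_iff) simp
  then show ?thesis by auto
qed

lemma finite_measure_law_C: "finite_measure (law_C S S' f r n)"
proof -
  interpret prob_space "bern_set S S' f r n" by (rule prob_space_bern_set)
  have "emeasure (law_C S S' f r n) (space (law_C S S' f r n))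
      \<le> emeasure (bern_set S S' f r n) (cproc_map S S' f r n -` space (law_C S S' f r n))"
    by (rule emeasure_law_C_le)
  also have "\<dots> \<le> 1"
    by (cases "cproc_map S S' f r n -` space (law_C S S' f r n) \<in> sets (bern_set S S' f r n)")
       (auto simp: emeasure_notin_sets intro: emeasure_le_1)
  finally show ?thesis by (intro finite_measureI) (auto simp: top_unique)
qed

lemma measure_law_C_le:
  assumes "E \<in> sets (bern_set S S' f r n)" "cproc_map S S' f r n -` A \<subseteq> E"
  shows "measure (law_C S S' f r n) A \<le> measure (bern_set S S' f r n) E"
proof -
  interpret prob_space "bern_set S S' f r n" by (rule prob_space_bern_set)
  have "emeasure (law_C S S' f r n) A \<le> emeasure (bern_set S S' f r n) E"
  proof (cases "cproc_map S S' f r n -` A \<in> sets (bern_set S S' f r n)")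
    case True
    then show ?thesis
      using emeasure_law_C_le[of S S' f r n A] emeasure_mono[OF assms(2,1)] by (meson order_trans)
  next
    case False
    then show ?thesis using emeasure_law_C_le[of S S' f r n A] by (simp add: emeasure_notin_sets)
  qed
  then show ?thesis unfolding measure_def by (intro enn2real_mono) (auto simp: less_top[symmetric])
qed

lemma integral_law_C_le:
  assumes F: "continuous_map (vague_top S S') euclideanreal F"
    and F_bounds: "\<And>\<nu>. \<nu> \<in> Nspace S S' \<Longrightarrow> 0 \<le> F \<nu> \<and> F \<nu> \<le> 1"
    and E: "E \<in> sets (bern_set S S' f r n)"
    and supp: "\<And>\<Phi>. F (cproc_map S S' f r n \<Phi>) \<noteq> 0 \<Longrightarrow> \<Phi> \<in> E"
  shows "(\<integral>\<nu>. F \<nu> \<partial>law_C S S' f r n) \<le> measure (bern_set S S' f r n) E"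
proof -
  let ?L = "law_C S S' f r n"
  interpret finite_measure ?L by (rule finite_measure_law_C)
  define V where "V = {\<nu> \<in> topspace (vague_top S S'). F \<nu> \<in> - {0}}"
  have "openin euclideanreal (- {0::real})" by (simp only: open_openin[symmetric]) auto
  then have "openin (vague_top S S') V"
    using F unfolding continuous_map_def V_def by blast
  then have V: "V \<in> sets ?L" by (simp add: openin_vague_top_in_sets)
  have "integrable ?L F"
    using F_bounds
    by (intro integrable_const_bound[where B=1] AE_I2)
       (auto simp: measurable_cong_sets[OF sets_law_C refl] borel_measurable_if_continuous_vague[OF F])
  moreover have "integrable ?L (indicator V :: _ \<Rightarrow> real)"
    using V by (simp add: emeasure_finite less_top[symmetric])
  ultimately have "(\<integral>\<nu>. F \<nu> \<partial>?L) \<le> (\<integral>\<nu>. indicator V \<nu> \<partial>?L)"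
    by (rule integral_mono) (use F_bounds in \<open>auto simp: V_def indicator_def\<close>)
  also have "\<dots> = measure ?L V"
    using V sets.sets_into_space[OF V] by (simp add: Int_absorb2)
  also have "\<dots> \<le> measure (bern_set S S' f r n) E"
    by (rule measure_law_C_le[OF E]) (use supp in \<open>auto simp: V_def\<close>)
  finally show ?thesis .
qed

lemma continuous_map_Ctop_indicator:
  "continuous_map (Ctop S S') euclideanreal (\<lambda>e. indicator (fst e) y)"
proof -
  have membership: "continuous_map fell_top (product_topology (\<lambda>_. discrete_topology UNIV) UNIV)
      (\<lambda>B y. y \<in> B)"
    unfolding fell_top_def using continuous_map_pullback[OF continuous_map_id] by (simp add: o_def)
  have projection: "continuous_map (product_topology (\<lambda>_. discrete_topology UNIV) UNIV)
      (discrete_topology (UNIV :: bool set)) (\<lambda>\<phi>. \<phi> y)"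
    using continuous_map_product_projection[of y UNIV "\<lambda>_. discrete_topology (UNIV :: bool set)"]
    by simp
  have "continuous_map (discrete_topology UNIV) euclideanreal (of_bool :: bool \<Rightarrow> real)"
    by (simp add: continuous_map_from_discrete_topology)
  then have "continuous_map fell_top euclideanreal (of_bool \<circ> ((\<lambda>\<phi>. \<phi> y) \<circ> (\<lambda>B y. y \<in> B)))"
    by (intro continuous_map_compose[OF continuous_map_compose[OF membership projection]])
  then have "continuous_map (prod_topology fell_top (product_topology (\<lambda>_. euclideanreal) UNIV))
      euclideanreal ((of_bool \<circ> ((\<lambda>\<phi>. \<phi> y) \<circ> (\<lambda>B y. y \<in> B))) \<circ> fst)"
    by (rule continuous_map_compose[OF continuous_map_fst])
  then have "continuous_map (Ctop S S') euclideanreal (of_bool \<circ> ((\<lambda>\<phi>. \<phi> y) \<circ> (\<lambda>B y. y \<in> B)) \<circ> fst)"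
    unfolding Ctop_def by (rule continuous_map_from_subtopology)
  then show ?thesis by (simp add: o_def indicator_def)
qed

lemma continuous_map_Ctop_horofunction:
  "continuous_map (Ctop S S') euclideanreal (\<lambda>e. snd e z)"
proof -
  have "continuous_map (prod_topology fell_top (product_topology (\<lambda>_. euclideanreal) UNIV)) euclideanreal
      ((\<lambda>\<theta>. \<theta> z) \<circ> snd)"
    by (rule continuous_map_compose[OF continuous_map_snd continuous_map_product_projection]) simp
  then show ?thesis unfolding Ctop_def o_def by (rule continuous_map_from_subtopology)
qed

lemma continuous_map_cintegral:
  assumes "test_fun S S' g"
  shows "continuous_map (vague_top S S') euclideanreal (\<lambda>\<nu>. cintegral \<nu> g)"
proof -
  have "continuous_map (vague_top S S') euclideanreal
      ((\<lambda>x. x g) \<circ> (\<lambda>\<nu> g. if test_fun S S' g then cintegral \<nu> g else 0))"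
    unfolding vague_top_def by (rule continuous_map_pullback[OF continuous_map_product_projection]) simp
  then show ?thesis using assms by (simp add: o_def)
qed

lemma cintegral_nonneg: "(\<And>e. 0 \<le> g e) \<Longrightarrow> 0 \<le> cintegral \<nu> g"
  unfolding cintegral_def by (intro sum_nonneg) auto

lemma cintegral_ge_atom:
  assumes "finite {e. 0 < \<nu> e \<and> g e \<noteq> 0}" "\<And>e. 0 \<le> g e" "0 < \<nu> e"
  shows "g e \<le> cintegral \<nu> g"
proof (cases "g e = 0")
  case True then show ?thesis using cintegral_nonneg[of g \<nu>] assms(2) by simp
next
  case False
  have "g e \<le> real (\<nu> e) * g e" using assms(2)[of e] assms(3) by (simp add: mult_le_cancel_right1)
  also have "\<dots> \<le> cintegral \<nu> g"
    unfolding cintegral_def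
    by (rule member_le_sum[where f="\<lambda>e. real (\<nu> e) * g e"]) (use assms False in auto)
  finally show ?thesis .
qed

lemma cintegral_nonzeroE:
  assumes "cintegral \<nu> g \<noteq> 0"
  obtains e where "0 < \<nu> e" "g e \<noteq> 0"
proof -
  have "{e. 0 < \<nu> e \<and> g e \<noteq> 0} \<noteq> {}"
  proof
    assume "{e. 0 < \<nu> e \<and> g e \<noteq> 0} = {}"
    then have "cintegral \<nu> g = 0" unfolding cintegral_def by (simp only: sum.empty)
    then show False using assms by simp
  qed
  then show ?thesis using that by blast
qed

lemma Nspace_finite_support:
  assumes "\<nu> \<in> Nspace S S'" "\<And>e. g e \<noteq> 0 \<Longrightarrow> y \<in> fst e"
  shows "finite {e. 0 < \<nu> e \<and> g e \<noteq> 0}"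
proof -
  have "finite {e. 0 < \<nu> e \<and> y \<in> fst e}" using assms(1) unfolding Nspace_def by blast
  then show ?thesis by (rule rev_finite_subset) (use assms(2) in auto)
qed

definition enum_point :: "nat \<Rightarrow> 'c" where
  "enum_point = from_nat_into UNIV"

lemma enum_point_surj:
  assumes "countable (UNIV :: 'c set)"
  obtains j where "enum_point j = (y :: 'c)"
  using from_nat_into_surj[OF assms] unfolding enum_point_def by (metis UNIV_I)

lemma limitin_pullback_topology_UNIV:
  assumes "limitin T (\<lambda>k. \<phi> (a k)) (\<phi> l) F"
  shows "limitin (pullback_topology UNIV \<phi> T) a l F"
  unfolding limitin_def
proof (intro conjI allI impI)
  show "l \<in> topspace (pullback_topology UNIV \<phi> T)"
    using assms by (simp add: topspace_pullback_topology limitin_def)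
  fix U assume U: "openin (pullback_topology UNIV \<phi> T) U \<and> l \<in> U"
  then obtain V where V: "openin T V" "U = \<phi> -` V \<inter> UNIV" by (auto simp: openin_pullback_topology)
  then have "\<forall>\<^sub>F k in F. \<phi> (a k) \<in> V" using assms U by (auto simp: limitin_def)
  then show "\<forall>\<^sub>F k in F. a k \<in> U" using V(2) by (auto elim: eventually_mono)
qed

lemma horo_in_horo_comp: "horo S S' x \<in> horo_comp S S'"
  unfolding horo_comp_def
  by (rule subsetD[OF closure_of_subset]) (auto simp: topspace_product_topology)

lemma limitin_CtopI:
  fixes e :: "('a::group_add \<times> 'b::group_add) set \<times> ('a \<times> 'b \<Rightarrow> real)"
  assumes "countable (UNIV :: ('a \<times> 'b) set)" "e \<in> Cspace S S'" "\<And>k. (B k, \<theta> k) \<in> Cspace S S'"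
    and approx: "\<And>k i. i < k \<Longrightarrow> (enum_point i \<in> B k \<longleftrightarrow> enum_point i \<in> fst e)
         \<and> \<bar>\<theta> k (enum_point i) - snd e (enum_point i)\<bar> < 2 / real (Suc k)"
  shows "limitin (Ctop S S') (\<lambda>k. (B k, \<theta> k)) e sequentially"
  unfolding Ctop_def limitin_subtopology limitin_pairwise
proof (intro conjI)
  show "limitin fell_top (fst \<circ> (\<lambda>k. (B k, \<theta> k))) (fst e) sequentially"
    unfolding fell_top_def o_def fst_conv
  proof (rule limitin_pullback_topology_UNIV)
    show "limitin (product_topology (\<lambda>_. discrete_topology UNIV) UNIV)
        (\<lambda>k y. y \<in> B k) (\<lambda>y. y \<in> fst e) sequentially"
      unfolding limitin_componentwise
    proof (intro conjI ballI)
      fix y :: "'a \<times> 'b"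
      obtain i where i: "enum_point i = y" using enum_point_surj[OF assms(1)] .
      have "\<forall>\<^sub>F k in sequentially. (y \<in> B k) = (y \<in> fst e)"
        using eventually_gt_at_top[of i] by (rule eventually_mono) (use approx i in blast)
      then show "limitin (discrete_topology UNIV) (\<lambda>k. y \<in> B k) (y \<in> fst e) sequentially"
        by (intro limitin_eventually) simp_all
    qed (auto simp: topspace_product_topology)
  qed
  show "limitin (product_topology (\<lambda>_. euclideanreal) UNIV) (snd \<circ> (\<lambda>k. (B k, \<theta> k))) (snd e) sequentially"
    unfolding limitin_componentwise o_def snd_conv
  proof (intro conjI ballI)
    fix y :: "'a \<times> 'b"
    obtain i where i: "enum_point i = y" using enum_point_surj[OF assms(1)] .
    have "\<forall>\<^sub>F k in sequentially. norm (\<theta> k y - snd e y) \<le> 2 / real (Suc k)"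
      using eventually_gt_at_top[of i] by (rule eventually_mono) (use approx i in force)
    moreover have "(\<lambda>k. 2 / real (Suc k)) \<longlonglongrightarrow> 0"
      using LIMSEQ_Suc[OF lim_const_over_n[of 2]] by simp
    ultimately have "(\<lambda>k. \<theta> k y - snd e y) \<longlonglongrightarrow> 0" by (rule Lim_null_comparison)
    then show "limitin euclideanreal (\<lambda>k. \<theta> k y) (snd e y) sequentially"
      by (simp add: LIM_zero_iff)
  qed (auto simp: topspace_product_topology)
qed (use assms(2,3) in auto)

section \<open>Nonemptiness of the limit\<close>

definition axis_ball :: "'a::group_add set \<Rightarrow> nat \<Rightarrow> ('a \<times> 'b::zero) set" where
  "axis_ball S R = (\<lambda>u. (u, 0)) ` word_ball S R"

definition meets_axis_ball :: "'a::group_add set \<Rightarrow> nat \<Rightarrow> ('a \<times> 'b::zero) set \<times> 'c \<Rightarrow> real" where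
  "meets_axis_ball S R e = min 1 (\<Sum>w\<in>axis_ball S R. indicator (fst e) w)"

definition avoids_axis_ball :: "'a::group_add set \<Rightarrow> nat \<Rightarrow> ((('a \<times> 'b::zero) set \<times> 'c) \<Rightarrow> nat) \<Rightarrow> real" where
  "avoids_axis_ball S R \<nu> = max 0 (1 - cintegral \<nu> (meets_axis_ball S R))"

lemma finite_axis_ball: "finite S \<Longrightarrow> generates S \<Longrightarrow> finite (axis_ball S R)"
  unfolding axis_ball_def using finite_word_ball by blast

lemma meets_axis_ball_nonneg: "0 \<le> meets_axis_ball S R e"
  unfolding meets_axis_ball_def by (auto intro: sum_nonneg)

lemma meets_axis_ball_nonzeroE:
  assumes "meets_axis_ball S R e \<noteq> 0"
  obtains w where "w \<in> axis_ball S R" "w \<in> fst e"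
proof -
  have "(\<Sum>w\<in>axis_ball S R. indicator (fst e) w :: real) \<noteq> 0"
    using assms by (auto simp: meets_axis_ball_def)
  then show ?thesis using that by (meson indicator_simps(2) sum.neutral)
qed

lemma meets_axis_ball_eq_1:
  assumes "finite S" "generates S" "w \<in> axis_ball S R" "w \<in> fst e"
  shows "meets_axis_ball S R e = 1"
proof -
  have "1 \<le> (\<Sum>w\<in>axis_ball S R. indicator (fst e) w :: real)"
    by (rule order.trans[OF _ member_le_sum[of w]]) (use assms finite_axis_ball in auto)
  then show ?thesis by (simp add: meets_axis_ball_def)
qed

lemma test_fun_meets_axis_ball:
  assumes "finite S" "generates S"
  shows "test_fun S S' (meets_axis_ball S R)"
  unfolding test_fun_def
proof
  show "continuous_map (Ctop S S') euclideanreal (meets_axis_ball S R)"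
    unfolding meets_axis_ball_def[abs_def]
    by (intro continuous_intros continuous_map_Ctop_indicator finite_axis_ball[OF assms])
  show "\<exists>F. finite F \<and> (\<forall>e\<in>Cspace S S'. meets_axis_ball S R e \<noteq> 0 \<longrightarrow> (\<exists>y\<in>F. y \<in> fst e))"
    using meets_axis_ball_nonzeroE finite_axis_ball[OF assms] by metis
qed

lemma avoids_axis_ball_bounds: "0 \<le> avoids_axis_ball S R \<nu> \<and> avoids_axis_ball S R \<nu> \<le> 1"
  using cintegral_nonneg[of "meets_axis_ball S R" \<nu>, OF meets_axis_ball_nonneg] by (auto simp: avoids_axis_ball_def)

lemma avoids_axis_ball_zero [simp]: "avoids_axis_ball S R (\<lambda>_. 0) = 1"
  by (simp add: avoids_axis_ball_def cintegral_def)

lemma pow_one_minus_mult_le_one: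
  fixes p :: real
  assumes "0 \<le> p" "p \<le> 1"
  shows "(1 - p) ^ N * (1 + real N * p) \<le> 1"
proof -
  have "(1 - p) ^ N * (1 + real N * p) \<le> (1 - p) ^ N * (1 + p) ^ N"
    using Bernoulli_inequality[of p N] assms by (intro mult_left_mono) auto
  also have "\<dots> = (1 - p * p) ^ N" by (simp add: power_mult_distrib[symmetric] algebra_simps)
  also have "\<dots> \<le> 1" using assms by (intro power_le_one) (auto simp: mult_le_one)
  finally show ?thesis .
qed

context diamond_family
begin

lemma continuous_map_avoids_axis_ball:
  "continuous_map (vague_top S S') euclideanreal (avoids_axis_ball S R)"
  unfolding avoids_axis_ball_def[abs_def]
  by (intro continuous_intros continuous_map_cintegral test_fun_meets_axis_ball finite_S generates_S)

lemma avoids_axis_ball_cproc_map_eq_0: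
  assumes "x \<in> hit_centers S S' f r n R" "\<Phi> x"
  shows "avoids_axis_ball S R (cproc_map S S' f r n \<Phi>) = 0"
proof -
  let ?e = "(D n x, horo S S' x)"
  let ?X = "hit_centers S S' f r n R"
  obtain w where w: "w \<in> word_ball S R" "(w, 0) \<in> D n x"
    using assms(1) by (auto simp: hit_centers_def)
  have "{e. 0 < cproc_map S S' f r n \<Phi> e \<and> meets_axis_ball S R e \<noteq> 0} \<subseteq> (\<lambda>x. (D n x, horo S S' x)) ` ?X"
  proof
    fix e assume "e \<in> {e. 0 < cproc_map S S' f r n \<Phi> e \<and> meets_axis_ball S R e \<noteq> 0}"
    then obtain y where y: "e = (D n y, horo S S' y)" "meets_axis_ball S R e \<noteq> 0"
      by (auto simp: cproc_map_pos_iff)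
    obtain v where "v \<in> axis_ball S R" "v \<in> fst e" using meets_axis_ball_nonzeroE[OF y(2)] .
    then have "y \<in> ?X" using y(1) by (auto simp: axis_ball_def hit_centers_def)
    then show "e \<in> (\<lambda>x. (D n x, horo S S' x)) ` ?X" using y(1) by blast
  qed
  then have "finite {e. 0 < cproc_map S S' f r n \<Phi> e \<and> meets_axis_ball S R e \<noteq> 0}"
    using finite_hit_centers by (meson finite_imageI finite_subset)
  moreover have "0 < cproc_map S S' f r n \<Phi> ?e" using assms(2) unfolding cproc_map_pos_iff by blast
  ultimately have "meets_axis_ball S R ?e \<le> cintegral (cproc_map S S' f r n \<Phi>) (meets_axis_ball S R)"
    by (rule cintegral_ge_atom[OF _ meets_axis_ball_nonneg])
  moreover have "meets_axis_ball S R ?e = 1"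
    using w by (intro meets_axis_ball_eq_1 finite_S generates_S) (auto simp: axis_ball_def)
  ultimately show ?thesis by (simp add: avoids_axis_ball_def)
qed

lemma integral_avoids_axis_ball_le:
  assumes "nonamenable S"
  obtains \<epsilon> :: real where "0 < \<epsilon>"
    "\<And>n R. (\<integral>\<nu>. avoids_axis_ball S R \<nu> \<partial>law_C S S' f r n) \<le> 1 / (1 + (1 + \<epsilon>) ^ R)"
proof -
  obtain \<epsilon> where \<epsilon>: "0 < \<epsilon>" and hit: "\<And>n R. (1 + \<epsilon>) ^ R * real (card (D n (0, 0)))
      \<le> real (card (hit_centers S S' f r n R))"
    using card_hit_centers_ge[OF assms] by blast
  have "(\<integral>\<nu>. avoids_axis_ball S R \<nu> \<partial>law_C S S' f r n) \<le> 1 / (1 + (1 + \<epsilon>) ^ R)" for n R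
  proof -
    let ?X = "hit_centers S S' f r n R"
    define p where "p = 1 / real (card (D n (0, 0)))"
    have p: "0 < p" "p \<le> 1" using card_diamond_pos[of n "(0, 0)"] by (auto simp: p_def)
    have "(\<integral>\<nu>. avoids_axis_ball S R \<nu> \<partial>law_C S S' f r n)
        \<le> measure (bern_set S S' f r n) {\<Phi>. \<forall>x\<in>?X. \<not> \<Phi> x}"
      using avoids_axis_ball_cproc_map_eq_0 avoids_axis_ball_bounds
      by (intro integral_law_C_le continuous_map_avoids_axis_ball bern_set_avoid(1) finite_hit_centers)
         blast+
    also have "\<dots> = (1 - p) ^ card ?X"
      using bern_set_avoid(2)[OF finite_hit_centers] by (simp add: p_def)
    also have "\<dots> \<le> 1 / (1 + (1 + \<epsilon>) ^ R)"
    proof -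
      have "(1 + \<epsilon>) ^ R \<le> real (card ?X) * p"
        using hit[of R n] card_diamond_pos[of n "(0, 0)"] by (simp add: p_def field_simps)
      then have "(1 - p) ^ card ?X * (1 + (1 + \<epsilon>) ^ R) \<le> (1 - p) ^ card ?X * (1 + real (card ?X) * p)"
        using p by (intro mult_left_mono) auto
      also have "\<dots> \<le> 1" using p by (intro pow_one_minus_mult_le_one) auto
      finally show ?thesis using \<epsilon> by (simp add: field_simps add_pos_nonneg)
    qed
    finally show ?thesis .
  qed
  then show ?thesis using that \<epsilon> by blast
qed

end

section \<open>Pattern functionals\<close>

text \<open>A pattern \<open>L\<close> prescribes, for the first \<open>length L\<close> points of a fixed enumeration, whether
  they lie in the set and (up to a rational) the value of the horofunction there.\<close>

definition pattern_dist :: "(bool \<times> rat) list \<Rightarrow> ('c set \<times> ('c \<Rightarrow> real)) \<Rightarrow> real" where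
  "pattern_dist L e = (\<Sum>i<length L.
     \<bar>indicator (fst e) (enum_point i) - of_bool (fst (L ! i))\<bar>
     + \<bar>snd e (enum_point i) - real_of_rat (snd (L ! i))\<bar>)"

definition pattern_bump :: "nat \<Rightarrow> nat \<Rightarrow> (bool \<times> rat) list \<Rightarrow> ('c set \<times> ('c \<Rightarrow> real)) \<Rightarrow> real" where
  "pattern_bump j R L e = indicator (fst e) (enum_point j) * max 0 (1 - real (Suc R) * pattern_dist L e)"

definition sees_pattern :: "nat \<Rightarrow> nat \<Rightarrow> (bool \<times> rat) list \<Rightarrow> (('c set \<times> ('c \<Rightarrow> real)) \<Rightarrow> nat) \<Rightarrow> real" where
  "sees_pattern j R L \<nu> = min 1 (cintegral \<nu> (pattern_bump j R L))"

lemma pattern_bump_nonneg: "0 \<le> pattern_bump j R L e"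
  by (simp add: pattern_bump_def)

lemma pattern_bump_nonzeroD:
  assumes "pattern_bump j R L e \<noteq> 0"
  shows "enum_point j \<in> fst e \<and> pattern_dist L e < 1 / real (Suc R)"
proof
  show "enum_point j \<in> fst e" using assms by (auto simp: pattern_bump_def indicator_def)
  have "real (Suc R) * pattern_dist L e < 1" using assms by (auto simp: pattern_bump_def)
  then show "pattern_dist L e < 1 / real (Suc R)" by (simp add: field_simps)
qed

lemma pattern_bump_pos:
  "enum_point j \<in> fst e \<Longrightarrow> pattern_dist L e < 1 / real (Suc R) \<Longrightarrow> 0 < pattern_bump j R L e"
  by (simp add: pattern_bump_def field_simps)

lemma test_fun_pattern_bump: "test_fun S S' (pattern_bump j R L)"
  unfolding test_fun_def
proof
  show "continuous_map (Ctop S S') euclideanreal (pattern_bump j R L)"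
    unfolding pattern_bump_def[abs_def] pattern_dist_def
    by (intro continuous_intros continuous_map_Ctop_indicator continuous_map_Ctop_horofunction) auto
  show "\<exists>F. finite F \<and> (\<forall>e\<in>Cspace S S'. pattern_bump j R L e \<noteq> 0 \<longrightarrow> (\<exists>y\<in>F. y \<in> fst e))"
    using pattern_bump_nonzeroD by (intro exI[of _ "{enum_point j}"]) blast
qed

lemma continuous_map_sees_pattern:
  "continuous_map (vague_top S S') euclideanreal (sees_pattern j R L)"
  unfolding sees_pattern_def[abs_def]
  by (intro continuous_intros continuous_map_cintegral test_fun_pattern_bump)

lemma sees_pattern_bounds: "0 \<le> sees_pattern j R L \<nu> \<and> sees_pattern j R L \<nu> \<le> 1"
  using cintegral_nonneg[of "pattern_bump j R L" \<nu>, OF pattern_bump_nonneg]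
  by (auto simp: sees_pattern_def)

lemma sees_pattern_pos:
  assumes "\<nu> \<in> Nspace S S'" "0 < \<nu> e" "0 < pattern_bump j R L e"
  shows "0 < sees_pattern j R L \<nu>"
proof -
  have "finite {e. 0 < \<nu> e \<and> pattern_bump j R L e \<noteq> 0}"
    using pattern_bump_nonzeroD by (intro Nspace_finite_support[OF assms(1)]) blast
  then have "pattern_bump j R L e \<le> cintegral \<nu> (pattern_bump j R L)"
    using cintegral_ge_atom[of \<nu> "pattern_bump j R L" e] pattern_bump_nonneg assms(2) by blast
  then show ?thesis using assms(3) by (simp add: sees_pattern_def)
qed

context diamond_family
begin

definition pattern_unrealised :: "nat \<Rightarrow> nat \<Rightarrow> (bool \<times> rat) list \<Rightarrow> bool" where
  "pattern_unrealised j R L \<longleftrightarrow> \<not> (\<exists>m x. R \<le> m \<and> R \<le> word_len S (fst x) \<and> R \<le> word_len S' (snd x)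
     \<and> enum_point j \<in> D m x \<and> pattern_dist L (D m x, horo S S' x) < 1 / real (Suc R))"

text \<open>An unrealised pattern can only be seen through a diamond whose centre is near one of the
  two axes.\<close>

lemma integral_sees_pattern_le_near:
  assumes "pattern_unrealised j R L" "R \<le> n"
  shows "(\<integral>\<nu>. sees_pattern j R L \<nu> \<partial>law_C S S' f r n) \<le>
     real (card {x. enum_point j \<in> D n x \<and> (word_len S (fst x) < R \<or> word_len S' (snd x) < R)})
     / real (card (D n (0, 0)))"
proof -
  let ?X = "{x. enum_point j \<in> D n x \<and> (word_len S (fst x) < R \<or> word_len S' (snd x) < R)}"
  have X: "finite ?X" by (rule finite_subset[OF _ finite_centers_covering]) auto
  have "(\<integral>\<nu>. sees_pattern j R L \<nu> \<partial>law_C S S' f r n) \<le> measure (bern_set S S' f r n) {\<Phi>. \<exists>x\<in>?X. \<Phi> x}"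
  proof (rule integral_law_C_le[OF continuous_map_sees_pattern _ bern_set_hit(1)[OF X]])
    show "0 \<le> sees_pattern j R L \<nu> \<and> sees_pattern j R L \<nu> \<le> 1" for \<nu>
      by (rule sees_pattern_bounds)
    fix \<Phi> assume "sees_pattern j R L (cproc_map S S' f r n \<Phi>) \<noteq> 0"
    then have "cintegral (cproc_map S S' f r n \<Phi>) (pattern_bump j R L) \<noteq> 0"
      by (auto simp: sees_pattern_def)
    then obtain e where e: "0 < cproc_map S S' f r n \<Phi> e" "pattern_bump j R L e \<noteq> 0"
      by (rule cintegral_nonzeroE)
    from e(1) obtain x where x: "\<Phi> x" "e = (D n x, horo S S' x)" by (auto simp: cproc_map_pos_iff)
    moreover have "\<not> (R \<le> n \<and> R \<le> word_len S (fst x) \<and> R \<le> word_len S' (snd x)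
        \<and> enum_point j \<in> D n x \<and> pattern_dist L (D n x, horo S S' x) < 1 / real (Suc R))"
      using assms(1) unfolding pattern_unrealised_def by blast
    ultimately have "x \<in> ?X" using pattern_bump_nonzeroD[OF e(2)] assms(2) by auto
    then show "\<Phi> \<in> {\<Phi>. \<exists>x\<in>?X. \<Phi> x}" using x(1) by blast
  qed
  also have "\<dots> \<le> real (card ?X) / real (card (D n (0, 0)))"
    by (rule bern_set_hit(2)[OF X])
  finally show ?thesis .
qed

lemma integral_sees_pattern_le:
  assumes "nonamenable S" "strict_mono r" "0 < A"
    and ratio: "\<And>n. A \<le> real (ball_vol S' (f (r n))) / real (ball_vol S (r n))
      \<and> real (ball_vol S' (f (r n))) / real (ball_vol S (r n)) \<le> B"
    and "pattern_unrealised j R L"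
  obtains C where "\<And>n. R \<le> n \<Longrightarrow> 1 \<le> n \<Longrightarrow> (\<integral>\<nu>. sees_pattern j R L \<nu> \<partial>law_C S S' f r n) \<le> C / real n"
proof -
  obtain c where c: "0 < c" "\<And>n. c * real n * real (ball_vol S (r n)) \<le> real (card (D n (0, 0)))"
    using card_diamond_ge_linear[OF assms(1-3)] ratio by blast
  define C where "C = (real (ball_vol S R) * B + real (ball_vol S' R)) / c"
  have "(\<integral>\<nu>. sees_pattern j R L \<nu> \<partial>law_C S S' f r n) \<le> C / real n" if n: "R \<le> n" "1 \<le> n" for n
  proof -
    let ?X = "{x. enum_point j \<in> D n x \<and> (word_len S (fst x) < R \<or> word_len S' (snd x) < R)}"
    have vol: "0 < real (ball_vol S (r n))" using ball_vol_pos[OF finite_S generates_S] by simp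
    have B: "real (ball_vol S' (f (r n))) \<le> B * real (ball_vol S (r n))"
      using ratio[of n] vol by (simp add: field_simps)
    have "real (card ?X) \<le> real (ball_vol S R * ball_vol S' (f (r n)) + ball_vol S (r n) * ball_vol S' R)"
      by (rule of_nat_mono[OF card_near_centers_le])
    also have "\<dots> \<le> real (ball_vol S R) * (B * real (ball_vol S (r n)))
        + real (ball_vol S (r n)) * real (ball_vol S' R)"
      using B by (simp add: mult_left_mono)
    also have "\<dots> = c * C * real (ball_vol S (r n))" using c(1) by (simp add: C_def field_simps)
    finally have X: "real (card ?X) \<le> c * C * real (ball_vol S (r n))" .
    then have "0 \<le> c * C * real (ball_vol S (r n))" by (meson of_nat_0_le_iff order_trans)
    then have "0 \<le> C" using c(1) vol by (simp add: zero_le_mult_iff)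
    have "real (card ?X) * real n \<le> c * C * real (ball_vol S (r n)) * real n"
      using X by (intro mult_right_mono) auto
    also have "\<dots> = C * (c * real n * real (ball_vol S (r n)))" by simp
    also have "\<dots> \<le> C * real (card (D n (0, 0)))" by (rule mult_left_mono[OF c(2) \<open>0 \<le> C\<close>])
    finally have "real (card ?X) / real (card (D n (0, 0))) \<le> C / real n"
      using card_diamond_pos[of n "(0, 0)"] n by (simp add: field_simps)
    then show ?thesis using integral_sees_pattern_le_near[OF assms(5) n(1)] by linarith
  qed
  then show ?thesis using that by blast
qed

end

section \<open>Approximation by far-away diamonds\<close>

lemma exists_rat_near:
  assumes "0 < \<rho>"
  obtains q :: rat where "\<bar>z - real_of_rat q\<bar> < \<rho>"
proof -
  obtain t where t: "t \<in> \<rat>" "z - \<rho> < t" "t < z + \<rho>"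
    using Rats_dense_in_real[of "z - \<rho>" "z + \<rho>"] assms by auto
  from t(1) obtain q where "t = real_of_rat q" by (auto elim: Rats_cases)
  then show ?thesis using t by (intro that[of q]) (auto simp: abs_less_iff)
qed

lemma pattern_dist_term_le:
  assumes "i < length L"
  shows "\<bar>indicator (fst e) (enum_point i) - of_bool (fst (L ! i))\<bar>
      + \<bar>snd e (enum_point i) - real_of_rat (snd (L ! i))\<bar> \<le> pattern_dist L e"
  unfolding pattern_dist_def
  by (rule member_le_sum[where f="\<lambda>i. \<bar>indicator (fst e) (enum_point i) - of_bool (fst (L ! i))\<bar>
      + \<bar>snd e (enum_point i) - real_of_rat (snd (L ! i))\<bar>"]) (use assms in auto)

lemma pattern_dist_small_exists:
  obtains L where "length L = R" "pattern_dist L e < 1 / real (Suc R)"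
proof -
  define \<rho> :: real where "\<rho> = 1 / real (Suc R) ^ 2"
  have \<rho>: "0 < \<rho>" by (simp add: \<rho>_def)
  have "\<forall>i. \<exists>q::rat. \<bar>snd e (enum_point i) - real_of_rat q\<bar> < \<rho>"
    using exists_rat_near[OF \<rho>] by metis
  then obtain q where q: "\<And>i. \<bar>snd e (enum_point i) - real_of_rat (q i)\<bar> < \<rho>" by metis
  define L where "L = map (\<lambda>i. (enum_point i \<in> fst e, q i)) [0..<R]"
  have "pattern_dist L e = (\<Sum>i<R. \<bar>snd e (enum_point i) - real_of_rat (q i)\<bar>)"
    unfolding pattern_dist_def L_def by (intro sum.cong) (auto simp: indicator_def)
  also have "\<dots> \<le> real R * \<rho>"
    using sum_mono[of "{..<R}" "\<lambda>i. \<bar>snd e (enum_point i) - real_of_rat (q i)\<bar>" "\<lambda>_. \<rho>"] q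
    by (simp add: less_imp_le)
  also have "\<dots> < real (Suc R) * \<rho>" using \<rho> by simp
  also have "\<dots> = 1 / real (Suc R)" by (simp add: \<rho>_def power2_eq_square)
  finally show ?thesis using that[of L] by (simp add: L_def)
qed

lemma pattern_dist_triangle:
  assumes "pattern_dist L e < \<delta>" "pattern_dist L e' < \<delta>" "\<delta> \<le> 1" "i < length L"
  shows "(enum_point i \<in> fst e \<longleftrightarrow> enum_point i \<in> fst e')
    \<and> \<bar>snd e (enum_point i) - snd e' (enum_point i)\<bar> < 2 * \<delta>"
proof -
  have close: "\<bar>indicator (fst e'') (enum_point i) - of_bool (fst (L ! i)) :: real\<bar> < 1
      \<and> \<bar>snd e'' (enum_point i) - real_of_rat (snd (L ! i))\<bar> < \<delta>" if "pattern_dist L e'' < \<delta>" for e''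
  proof -
    have "\<And>a c p :: real. a + c \<le> p \<Longrightarrow> p < \<delta> \<Longrightarrow> 0 \<le> a \<Longrightarrow> 0 \<le> c \<Longrightarrow> a < 1 \<and> c < \<delta>"
      using assms(3) by linarith
    from this[OF pattern_dist_term_le[OF assms(4), of e''] that abs_ge_zero abs_ge_zero]
    show ?thesis .
  qed
  have mem: "(enum_point i \<in> fst e'') = fst (L ! i)" if "pattern_dist L e'' < \<delta>" for e''
    using close[OF that] by (cases "fst (L ! i)") (auto simp: indicator_def)
  show ?thesis using mem[OF assms(1)] mem[OF assms(2)] close[OF assms(1)] close[OF assms(2)] by auto
qed

context diamond_family
begin

lemma countable_UNIV_prod: "countable (UNIV :: ('a \<times> 'b) set)"
  using countable_UNIV_if_generates[OF finite_S generates_S]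
    countable_UNIV_if_generates[OF finite_S' generates_S'] by (metis UNIV_Times_UNIV countable_SIGMA)

lemma far_diamond_approximations:
  assumes "\<nu> \<in> Nspace S S'" "\<And>j R L. pattern_unrealised j R L \<Longrightarrow> sees_pattern j R L \<nu> = 0"
    and "0 < \<nu> e"
  shows "\<exists>m x. R \<le> m \<and> R \<le> word_len S (fst x) \<and> R \<le> word_len S' (snd x)
    \<and> (\<forall>i<R. (enum_point i \<in> D m x \<longleftrightarrow> enum_point i \<in> fst e)
       \<and> \<bar>horo S S' x (enum_point i) - snd e (enum_point i)\<bar> < 2 / real (Suc R))"
proof -
  have "e \<in> Cspace S S'" using assms(1,3) unfolding Nspace_def by blast
  then obtain y where "y \<in> fst e" by (auto simp: Cspace_def)
  moreover obtain j where "enum_point j = y" using enum_point_surj[OF countable_UNIV_prod] .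
  ultimately have j: "enum_point j \<in> fst e" by simp
  obtain L where L: "length L = R" "pattern_dist L e < 1 / real (Suc R)"
    using pattern_dist_small_exists .
  have "0 < sees_pattern j R L \<nu>"
    using pattern_bump_pos[OF j L(2)] by (rule sees_pattern_pos[OF assms(1,3)])
  with assms(2) have "\<not> pattern_unrealised j R L" by force
  then obtain m x where mx: "R \<le> m" "R \<le> word_len S (fst x)" "R \<le> word_len S' (snd x)"
      "pattern_dist L (D m x, horo S S' x) < 1 / real (Suc R)"
    unfolding pattern_unrealised_def by blast
  have "(enum_point i \<in> D m x \<longleftrightarrow> enum_point i \<in> fst e)
      \<and> \<bar>horo S S' x (enum_point i) - snd e (enum_point i)\<bar> < 2 / real (Suc R)" if "i < R" for i
    using pattern_dist_triangle[OF mx(4) L(2), of i] that L(1) by simp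
  then show ?thesis using mx(1-3) by blast
qed

lemma horoball_II_if_misses_unrealised_patterns:
  assumes "\<nu> \<in> Nspace S S'" "\<And>j R L. pattern_unrealised j R L \<Longrightarrow> sees_pattern j R L \<nu> = 0"
    and "0 < \<nu> e"
  shows "horoball_II S S' f r e"
proof -
  obtain m x where mx: "\<And>k. k \<le> m k" "\<And>k. k \<le> word_len S (fst (x k))"
    "\<And>k. k \<le> word_len S' (snd (x k))"
    "\<And>k i. i < k \<Longrightarrow> (enum_point i \<in> D (m k) (x k) \<longleftrightarrow> enum_point i \<in> fst e)
       \<and> \<bar>horo S S' (x k) (enum_point i) - snd e (enum_point i)\<bar> < 2 / real (Suc k)"
    using far_diamond_approximations[OF assms] by metis
  have "filterlim m at_top sequentially"
    by (rule filterlim_at_top_mono[OF filterlim_ident]) (use mx(1) in \<open>auto intro: always_eventually\<close>)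
  moreover have "filterlim (\<lambda>k. wdist S 0 (fst (x k))) at_top sequentially"
    by (rule filterlim_at_top_mono[OF filterlim_ident]) (use mx(2) in \<open>auto intro: always_eventually\<close>)
  moreover have "filterlim (\<lambda>k. wdist S' 0 (snd (x k))) at_top sequentially"
    by (rule filterlim_at_top_mono[OF filterlim_ident]) (use mx(3) in \<open>auto intro: always_eventually\<close>)
  moreover have "limitin (Ctop S S') (\<lambda>k. (D (m k) (x k), horo S S' (x k))) e sequentially"
  proof (rule limitin_CtopI[OF countable_UNIV_prod _ _ mx(4)])
    show "e \<in> Cspace S S'" using assms(1,3) unfolding Nspace_def by blast
    show "(D (m k) (x k), horo S S' (x k)) \<in> Cspace S S'" for k
      using center_in_diamond[of "x k" S S' f r "m k"] horo_in_horo_comp[of S S' "x k"]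
      unfolding Cspace_def by blast
  qed
  ultimately show ?thesis unfolding horoball_II_def by blast
qed

end

locale diamond_limit = diamond_family S S' f r + P: prob_space P
  for S :: "'a::group_add set" and S' :: "'b::group_add set" and f r :: "nat \<Rightarrow> nat"
    and P :: "((('a \<times> 'b) set \<times> ('a \<times> 'b \<Rightarrow> real)) \<Rightarrow> nat) measure" +
  fixes nk :: "nat \<Rightarrow> nat" and A B :: real
  assumes nonamenable_S: "nonamenable S" and strict_mono_r: "strict_mono r"
    and A_pos: "0 < A"
    and ratio_bounds: "\<And>n. A \<le> real (ball_vol S' (f (r n))) / real (ball_vol S (r n))
      \<and> real (ball_vol S' (f (r n))) / real (ball_vol S (r n)) \<le> B"
    and strict_mono_nk: "strict_mono nk"
    and sets_P: "sets P = sets (vague_borel S S')"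
    and weak_conv: "weak_conv_pp S S' (\<lambda>k. law_C S S' f r (nk k)) P"
begin

lemma space_P: "space P = Nspace S S'"
  using sets_eq_imp_space_eq[OF sets_P] by simp

lemma borel_measurable_P:
  "continuous_map (vague_top S S') euclideanreal F \<Longrightarrow> F \<in> borel_measurable P"
  unfolding measurable_cong_sets[OF sets_P refl] by (rule borel_measurable_if_continuous_vague)

lemma integrable_P:
  assumes "continuous_map (vague_top S S') euclideanreal F" "\<And>\<nu>. 0 \<le> F \<nu> \<and> F \<nu> \<le> 1"
  shows "integrable P F"
  using assms(2) by (intro P.integrable_const_bound[where B=1] AE_I2 borel_measurable_P[OF assms(1)]) auto

lemma integral_law_C_tendsto:
  assumes "continuous_map (vague_top S S') euclideanreal F" "\<And>\<nu>. 0 \<le> F \<nu> \<and> F \<nu> \<le> 1"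
  shows "(\<lambda>k. \<integral>\<nu>. F \<nu> \<partial>law_C S S' f r (nk k)) \<longlonglongrightarrow> (\<integral>\<nu>. F \<nu> \<partial>P)"
proof -
  have "\<forall>\<nu>\<in>Nspace S S'. \<bar>F \<nu>\<bar> \<le> 1" using assms(2) by (simp add: abs_le_iff)
  then show ?thesis using weak_conv assms(1) unfolding weak_conv_pp_def by blast
qed

lemma AE_nonempty: "AE \<nu> in P. \<exists>e. 0 < \<nu> e"
proof -
  obtain \<epsilon> :: real where \<epsilon>: "0 < \<epsilon>"
    and bound: "\<And>n R. (\<integral>\<nu>. avoids_axis_ball S R \<nu> \<partial>law_C S S' f r n) \<le> 1 / (1 + (1 + \<epsilon>) ^ R)"
    using integral_avoids_axis_ball_le[OF nonamenable_S] by blast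
  note avoids = continuous_map_avoids_axis_ball avoids_axis_ball_bounds
  define N where "N = (\<Inter>R. {\<nu> \<in> space P. 1 \<le> avoids_axis_ball S R \<nu>})"
  have N: "N \<in> sets P" unfolding N_def using borel_measurable_P[OF avoids(1)] by measurable
  have "measure P N \<le> inverse (1 + \<epsilon>) ^ R" for R
  proof -
    have "measure P N \<le> measure P {\<nu> \<in> space P. 1 \<le> avoids_axis_ball S R \<nu>}"
      using borel_measurable_P[OF avoids(1)] by (intro P.finite_measure_mono) (auto simp: N_def)
    also have "\<dots> \<le> (\<integral>\<nu>. avoids_axis_ball S R \<nu> \<partial>P) / 1"
      using avoids(2) by (intro integral_Markov_inequality_measure[OF integrable_P[OF avoids] N]) auto
    also have "\<dots> = (\<integral>\<nu>. avoids_axis_ball S R \<nu> \<partial>P)" by simp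
    also have "\<dots> \<le> 1 / (1 + (1 + \<epsilon>) ^ R)"
      by (rule LIMSEQ_le_const2[OF integral_law_C_tendsto[OF avoids]]) (use bound in auto)
    also have "\<dots> \<le> inverse (1 + \<epsilon>) ^ R"
      using \<epsilon> by (simp add: power_inverse divide_inverse le_imp_inverse_le)
    finally show ?thesis .
  qed
  then have "measure P N \<le> 0"
    using \<epsilon> by (intro LIMSEQ_le_const[OF LIMSEQ_power_zero[of "inverse (1 + \<epsilon>)"]])
      (auto simp: inverse_less_1_iff)
  then have "N \<in> null_sets P"
    using N measure_nonneg[of P N] by (simp add: P.emeasure_eq_measure null_sets_def)
  moreover have "{\<nu> \<in> space P. \<not> (\<exists>e. 0 < \<nu> e)} \<subseteq> N"
  proof
    fix \<nu> assume "\<nu> \<in> {\<nu> \<in> space P. \<not> (\<exists>e. 0 < \<nu> e)}"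
    then have "\<nu> \<in> space P" "\<nu> = (\<lambda>_. 0)" by (auto simp: fun_eq_iff)
    then show "\<nu> \<in> N" by (simp add: N_def)
  qed
  ultimately show ?thesis by (rule AE_I')
qed

lemma integral_sees_pattern_eq_0:
  assumes "pattern_unrealised j R L"
  shows "(\<integral>\<nu>. sees_pattern j R L \<nu> \<partial>P) = 0"
proof -
  obtain C where C: "\<And>n. R \<le> n \<Longrightarrow> 1 \<le> n \<Longrightarrow> (\<integral>\<nu>. sees_pattern j R L \<nu> \<partial>law_C S S' f r n) \<le> C / real n"
    using integral_sees_pattern_le[OF nonamenable_S strict_mono_r A_pos ratio_bounds assms] by blast
  have "\<forall>\<^sub>F k in sequentially. norm (\<integral>\<nu>. sees_pattern j R L \<nu> \<partial>law_C S S' f r (nk k)) \<le> \<bar>C\<bar> / real k"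
  proof (rule eventually_mono[OF eventually_ge_at_top[of "max R 1"]])
    fix k assume k: "max R 1 \<le> k"
    have nk: "k \<le> nk k" by (rule seq_suble[OF strict_mono_nk])
    have "(\<integral>\<nu>. sees_pattern j R L \<nu> \<partial>law_C S S' f r (nk k)) \<le> C / real (nk k)"
      by (rule C) (use k nk in auto)
    also have "\<dots> \<le> \<bar>C\<bar> / real (nk k)" by (intro divide_right_mono) auto
    also have "\<dots> \<le> \<bar>C\<bar> / real k" using k nk by (intro divide_left_mono) auto
    finally have "(\<integral>\<nu>. sees_pattern j R L \<nu> \<partial>law_C S S' f r (nk k)) \<le> \<bar>C\<bar> / real k" .
    moreover have "0 \<le> (\<integral>\<nu>. sees_pattern j R L \<nu> \<partial>law_C S S' f r (nk k))"
      by (intro integral_nonneg_AE AE_I2) (simp add: sees_pattern_bounds)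
    ultimately show "norm (\<integral>\<nu>. sees_pattern j R L \<nu> \<partial>law_C S S' f r (nk k)) \<le> \<bar>C\<bar> / real k"
      by simp
  qed
  then have "(\<lambda>k. \<integral>\<nu>. sees_pattern j R L \<nu> \<partial>law_C S S' f r (nk k)) \<longlonglongrightarrow> 0"
    by (rule Lim_null_comparison) (rule lim_const_over_n)
  with integral_law_C_tendsto[OF continuous_map_sees_pattern sees_pattern_bounds]
  show ?thesis by (rule LIMSEQ_unique)
qed

lemma AE_horoball_II: "AE \<nu> in P. \<forall>e. 0 < \<nu> e \<longrightarrow> horoball_II S S' f r e"
proof -
  have "AE \<nu> in P. pattern_unrealised j R L \<longrightarrow> sees_pattern j R L \<nu> = 0" for j R L
  proof (cases "pattern_unrealised j R L")
    case True
    have "integrable P (sees_pattern j R L)"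
      by (rule integrable_P[OF continuous_map_sees_pattern sees_pattern_bounds])
    then have "AE \<nu> in P. sees_pattern j R L \<nu> = 0"
      using integral_nonneg_eq_0_iff_AE integral_sees_pattern_eq_0[OF True] sees_pattern_bounds
      by blast
    then show ?thesis by auto
  qed simp
  then have "AE \<nu> in P. \<forall>j R L. pattern_unrealised j R L \<longrightarrow> sees_pattern j R L \<nu> = 0"
    by (simp add: AE_all_countable)
  with AE_space show ?thesis
  proof eventually_elim
    case (elim \<nu>)
    then show ?case using horoball_II_if_misses_unrealised_patterns[of \<nu>] space_P by blast
  qed
qed

end

theorem lemma4p1:
  fixes S :: "'a::group_add set" and S' :: "'b::group_add set"
    and f r nk :: "nat \<Rightarrow> nat"
    and P :: "((('a \<times> 'b) set \<times> ('a \<times> 'b \<Rightarrow> real)) \<Rightarrow> nat) measure"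
  assumes "finite S" "generates S" "finite S'" "generates S'"
    and "nonamenable S" "nonamenable S'"
    and "mono f" "f 0 = 0" "strict_mono r"
    and "\<exists>A B. 0 < A \<and> (\<forall>n. A \<le> real (ball_vol S' (f (r n))) / real (ball_vol S (r n))
                              \<and> real (ball_vol S' (f (r n))) / real (ball_vol S (r n)) \<le> B)"
    and "\<forall>m. \<exists>N. \<forall>n\<ge>N. \<bar>real (f (n + m)) - real (f n) - cexp S S' * real m\<bar> \<le> 1"
    and "strict_mono nk"
    and "prob_space P" "sets P = sets (vague_borel S S')"
    and "weak_conv_pp S S' (\<lambda>k. law_C S S' f r (nk k)) P"
  shows "AE \<nu> in P. (\<exists>e. 0 < \<nu> e) \<and> (\<forall>e. 0 < \<nu> e \<longrightarrow> horoball_II S S' f r e)"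
proof -
  obtain A B where "0 < A" and ratio: "\<And>n. A \<le> real (ball_vol S' (f (r n))) / real (ball_vol S (r n))
      \<and> real (ball_vol S' (f (r n))) / real (ball_vol S (r n)) \<le> B"
    using assms(10) by blast
  interpret diamond_limit S S' f r P nk A B
    by (intro diamond_limit.intro diamond_family.intro diamond_limit_axioms.intro assms \<open>0 < A\<close> ratio)
  show ?thesis using AE_nonempty AE_horoball_II by simp
qed

end
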